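(* Let $p\in[1,\infty)$, $M>0$, let $x^N\in\mathcal K_N$ for each $N\in\mathbb N$, and set $\hat\mu^N=\mathcal E^N(x^N)$, $\mu^N=\mathcal{PC}^N(x^N)$. Let $\mu\in\mathscr P(\mathbb R)$. Then: (i) $\hat\mu^N\to\mu$ vaguely if and only if $\mu^N\to\mu$ vaguely; (ii) the $p$-th moments of $(\hat\mu^N)_N$ are equi-integrable if and only if the $p$-th moments of $(\mu^N)_N$ are equi-integrable; (iii) $\mathbb W_p(\hat\mu^N,\mu)\to0$ if and only if $\mathbb W_p(\mu^N,\mu)\to0$.
   Context: $\mathcal K_N=\{x=(x_0,\dots,x_N)\in\mathbb R^{N+1}:x_{i+1}-x_i\ge 1/(NM)\ \forall i\}$. For $x\in\mathcal K_N$: $R_i^N(x)=1/(N(x_{i+1}-x_i))$, $\mathcal{PC}^N(x)=\sum_{i=0}^{N-1}R_i^N(x)\mathbb 1_{[x_i,x_{i+1}]}\mathscr L^1$ (so each interval $[x_i,x_{i+1}]$ has mass $1/N$) and $\mathcal E^N(x)=\frac1{N+1}\sum_{i=0}^N\delta_{x_i}$. Equi-integrability of $p$-th moments of $(\mu^N)$: for every $\varepsilon>0$ there is $L>0$ with $\limsup_N\int_{\mathbb R\setminus[-L,L]}|x|^p\,d\mu^N<\varepsilon$. Vague convergence is convergence against $C_c(\mathbb R)$. *)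

theory Defs
  imports "HOL-Probability.Probability"
begin

text \<open>Configurations: x = (x_0,...,x_N) is represented by a function nat => real,
  only the values at indices 0..N matter.\<close>
definition KN :: "nat \<Rightarrow> real \<Rightarrow> (nat \<Rightarrow> real) \<Rightarrow> bool" where
  "KN N M x \<longleftrightarrow> (\<forall>i<N. x (Suc i) - x i \<ge> 1 / (real N * M))"

definition RN :: "nat \<Rightarrow> (nat \<Rightarrow> real) \<Rightarrow> nat \<Rightarrow> real" where
  "RN N x i = 1 / (real N * (x (Suc i) - x i))"

definition PC :: "nat \<Rightarrow> (nat \<Rightarrow> real) \<Rightarrow> real measure" where
  "PC N x = density lborel
     (\<lambda>t. \<Sum>i<N. ennreal (RN N x i) * indicator {x i..x (Suc i)} t)"

text \<open>Empirical measure E^N(x) = 1/(N+1) sum_{i=0}^N delta_{x_i}.\<close>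
definition EM :: "nat \<Rightarrow> (nat \<Rightarrow> real) \<Rightarrow> real measure" where
  "EM N x = distr (uniform_measure (count_space {..N}) {..N}) borel x"

definition prob_real :: "real measure \<Rightarrow> bool" where
  "prob_real \<mu> \<longleftrightarrow> prob_space \<mu> \<and> sets \<mu> = sets borel"

definition vague_conv :: "(nat \<Rightarrow> real measure) \<Rightarrow> real measure \<Rightarrow> bool" where
  "vague_conv \<mu>s \<mu> \<longleftrightarrow>
     (\<forall>f :: real \<Rightarrow> real. continuous_on UNIV f \<and> compact (closure {t. f t \<noteq> 0}) \<longrightarrow>
        (\<lambda>N. integral\<^sup>L (\<mu>s N) f) \<longlonglongrightarrow> integral\<^sup>L \<mu> f)"

definition equi_int_moments :: "real \<Rightarrow> (nat \<Rightarrow> real measure) \<Rightarrow> bool" where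
  "equi_int_moments p \<mu>s \<longleftrightarrow>
     (\<forall>\<epsilon>>0. \<exists>L>0. limsup (\<lambda>N. \<integral>\<^sup>+ t. ennreal (\<bar>t\<bar> powr p) * indicator (- {-L..L}) t \<partial>(\<mu>s N))
                     < ennreal \<epsilon>)"

definition couplings :: "real measure \<Rightarrow> real measure \<Rightarrow> (real \<times> real) measure set" where
  "couplings \<mu> \<nu> = {\<pi>. sets \<pi> = sets (borel \<Otimes>\<^sub>M borel) \<and>
        distr \<pi> borel fst = \<mu> \<and> distr \<pi> borel snd = \<nu>}"

definition wass_cost :: "real \<Rightarrow> real measure \<Rightarrow> real measure \<Rightarrow> ennreal" where
  "wass_cost p \<mu> \<nu> = (INF \<pi>\<in>couplings \<mu> \<nu>. \<integral>\<^sup>+ z. ennreal (\<bar>fst z - snd z\<bar> powr p) \<partial>\<pi>)"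

definition Wp :: "real \<Rightarrow> real measure \<Rightarrow> real measure \<Rightarrow> ennreal" where
  "Wp p \<mu> \<nu> = (if wass_cost p \<mu> \<nu> = \<infinity> then \<infinity>
                else ennreal (enn2real (wass_cost p \<mu> \<nu>) powr (1 / p)))"

end

(*
  Cut the real line at the (k / (N + 1))-quantiles of PC^N(x): the resulting cells all have
  PC-mass 1 / (N + 1), so the monotone map S (transport below) sending the k-th cell to x_k pushes
  PC^N(x) forward to E^N(x). Each quantile lies in the interval [x_(k-1), x_k], hence S moves a
  point of (x_i, x_(i+1)] to x_i or x_(i+1), and |S y - y| is at most the local gap.

  (i) For continuous f supported in [-L, L], uniform continuity bounds the difference of the
  integrals by eps + K * (1/N) * sum_i (clipped gap)_i <= eps + 2 K L / N: the clipped gaps telescope.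
  (ii) Every interval carries mass 1/N, comparable to the mass 1/(N+1) of an atom. The tail of
  PC beyond L is bounded by that of E at the endpoints; conversely a quarter of each interval lies
  at distance at least half its far endpoint from 0.
  (iii) Pushing a coupling of PC and mu forward by S, or gluing a coupling of E and mu to PC along
  the cells of S, transfers couplings in both directions at the extra cost int |S y - y|^p dPC.
  This cost is at most (2 L)^p / N plus a multiple of the tail of E beyond L, so it tends to 0
  under equi-integrability of the p-th moments, which W_p-convergence to mu implies.
*)

theory Submission
  imports Defs
begin

definition clip :: "real \<Rightarrow> real \<Rightarrow> real" where
  "clip L y = max (- L) (min L y)"

lemma clip_in_interval: "L \<ge> 0 \<Longrightarrow> clip L y \<in> {-L..L}"
  by (auto simp: clip_def)

lemma clip_mono: "a \<le> b \<Longrightarrow> clip L a \<le> clip L b"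
  by (auto simp: clip_def)

lemma clip_eq_self: "\<bar>y\<bar> \<le> L \<Longrightarrow> clip L y = y"
  by (auto simp: clip_def)

lemma borel_measurable_clip[measurable]: "clip L \<in> borel_measurable borel"
  unfolding clip_def[abs_def] by measurable

lemma sum_clip_telescope_le:
  assumes "L \<ge> 0"
  shows "(\<Sum>i<n. clip L (f (Suc i)) - clip L (f i)) \<le> 2 * L"
proof -
  have "(\<Sum>i<n. clip L (f (Suc i)) - clip L (f i)) = clip L (f n) - clip L (f 0)"
    by (rule sum_lessThan_telescope)
  also have "\<dots> \<le> 2 * L"
    using assms by (auto simp: clip_def)
  finally show ?thesis .
qed

lemma abs_diff_powr_le:
  fixes a b c :: real
  assumes "p \<ge> 0"
  shows "\<bar>a - c\<bar> powr p \<le> 2 powr p * (\<bar>a - b\<bar> powr p + \<bar>b - c\<bar> powr p)"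
proof -
  define m where "m = max \<bar>a - b\<bar> \<bar>b - c\<bar>"
  have "\<bar>a - c\<bar> \<le> 2 * m"
    using abs_triangle_ineq[of "a - b" "b - c"] by (auto simp: m_def max_def)
  then have "\<bar>a - c\<bar> powr p \<le> (2 * m) powr p"
    using assms by (intro powr_mono2) auto
  also have "\<dots> = 2 powr p * m powr p"
    by (simp add: powr_mult m_def)
  also have "m powr p \<le> \<bar>a - b\<bar> powr p + \<bar>b - c\<bar> powr p"
    by (simp add: m_def max_def)
  finally show ?thesis
    by simp
qed

lemma ennreal_abs_diff_powr_le:
  fixes a b c :: real
  assumes "p \<ge> 0"
  shows "ennreal (\<bar>a - c\<bar> powr p)
    \<le> ennreal (2 powr p) * (ennreal (\<bar>a - b\<bar> powr p) + ennreal (\<bar>b - c\<bar> powr p))"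
  using abs_diff_powr_le[OF assms, of a c b]
  by (simp add: ennreal_mult[symmetric] ennreal_plus[symmetric] del: ennreal_plus)

lemma sum_adjacent_le:
  fixes f :: "nat \<Rightarrow> ennreal"
  shows "(\<Sum>i<n. f i + f (Suc i)) \<le> 2 * (\<Sum>k\<le>n. f k)"
proof -
  have "(\<Sum>i<n. f i) \<le> (\<Sum>k\<le>n. f k)"
    by (rule sum_mono2) auto
  moreover have "(\<Sum>i<n. f (Suc i)) \<le> (\<Sum>k\<le>n. f k)"
    by (simp add: lessThan_Suc_atMost[symmetric] sum.lessThan_Suc_shift del: sum.lessThan_Suc)
  ultimately show ?thesis
    by (simp add: sum.distrib mult_2 add_mono)
qed

lemma sum_le_adjacent:
  fixes f :: "nat \<Rightarrow> ennreal"
  assumes "n \<ge> 1"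
  shows "(\<Sum>k\<le>n. f k) \<le> (\<Sum>i<n. f i + f (Suc i))"
proof -
  have "(\<Sum>k\<le>n. f k) = f 0 + (\<Sum>i<n. f (Suc i))"
    by (simp add: lessThan_Suc_atMost[symmetric] sum.lessThan_Suc_shift del: sum.lessThan_Suc)
  also have "f 0 \<le> (\<Sum>i<n. f i)"
    using assms by (intro member_le_sum) auto
  finally show ?thesis
    by (simp add: sum.distrib add_right_mono)
qed

lemma ennreal_mult_inverse_Suc: "ennreal (real n + 1) * ennreal (1 / (real n + 1)) = 1"
  by (subst ennreal_mult[symmetric]) auto

lemma ennreal_mult_less_mult:
  assumes "c > 0" "t < ennreal r"
  shows "ennreal c * t < ennreal (c * r)"
proof -
  have "r > 0"
  proof (rule ccontr)
    assume "\<not> r > 0"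
    then have "ennreal r = 0"
      by (simp add: ennreal_neg)
    then show False
      using assms(2) by simp
  qed
  have "ennreal c * t < ennreal c * ennreal r"
    using assms by (intro ennreal_mult_strict_left_mono) auto
  then show ?thesis
    using assms \<open>r > 0\<close> by (simp add: ennreal_mult)
qed

lemma ennreal_inverse_le_twice_inverse_Suc:
  "n \<ge> 1 \<Longrightarrow> ennreal (1 / real n) \<le> 2 * ennreal (1 / (real n + 1))"
  by (subst ennreal_numeral[symmetric], subst ennreal_mult[symmetric])
     (auto intro!: ennreal_leI simp: field_simps)

section \<open>Tails of \<open>p\<close>-th moments\<close>

definition tail_weight :: "real \<Rightarrow> real \<Rightarrow> real \<Rightarrow> ennreal" where
  "tail_weight p L t = ennreal (\<bar>t\<bar> powr p) * indicator (- {-L..L}) t"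

lemma tail_weight_eq: "tail_weight p L t = (if L < \<bar>t\<bar> then ennreal (\<bar>t\<bar> powr p) else 0)"
  by (auto simp: tail_weight_def indicator_def)

lemma borel_measurable_tail_weight[measurable]: "tail_weight p L \<in> borel_measurable borel"
  unfolding tail_weight_def[abs_def] by measurable

lemma tail_weight_antimono: "L \<le> L' \<Longrightarrow> tail_weight p L' t \<le> tail_weight p L t"
  by (auto simp: tail_weight_eq)

lemma tail_weight_le_endpoints:
  assumes "a < y" "y \<le> b" "p \<ge> 0"
  shows "tail_weight p L y \<le> tail_weight p L a + tail_weight p L b"
proof (cases "L < \<bar>y\<bar>")
  case True
  show ?thesis
  proof (cases "\<bar>a\<bar> \<le> \<bar>b\<bar>")
    case True
    then have "tail_weight p L y \<le> tail_weight p L b"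
      using \<open>L < \<bar>y\<bar>\<close> assms by (auto simp: tail_weight_eq intro!: ennreal_leI powr_mono2)
    then show ?thesis
      by (simp add: add_increasing)
  next
    case False
    then have "tail_weight p L y \<le> tail_weight p L a"
      using \<open>L < \<bar>y\<bar>\<close> assms by (auto simp: tail_weight_eq intro!: ennreal_leI powr_mono2)
    then show ?thesis
      by (simp add: add_increasing2)
  qed
qed (simp add: tail_weight_eq)

lemma tail_weight_le_shift:
  assumes "p \<ge> 0"
  shows "tail_weight p L s \<le> ennreal (2 powr p) * (ennreal (\<bar>s - t\<bar> powr p) + tail_weight p (L / 2) t)"
proof (cases "L < \<bar>s\<bar>")
  case True
  show ?thesis
  proof (cases "L / 2 < \<bar>t\<bar>")
    case True
    then show ?thesis
      using \<open>L < \<bar>s\<bar>\<close> ennreal_abs_diff_powr_le[OF assms, of s 0 t] by (simp add: tail_weight_eq)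
  next
    case False
    then have "\<bar>s\<bar> \<le> 2 * \<bar>s - t\<bar>"
      using \<open>L < \<bar>s\<bar>\<close> abs_triangle_ineq2[of s t] by (simp add: not_less)
    then have "\<bar>s\<bar> powr p \<le> 2 powr p * \<bar>s - t\<bar> powr p"
      using assms powr_mono2[of p "\<bar>s\<bar>" "2 * \<bar>s - t\<bar>"] by (simp add: powr_mult)
    then have "ennreal (\<bar>s\<bar> powr p) \<le> ennreal (2 powr p) * ennreal (\<bar>s - t\<bar> powr p)"
      by (simp add: ennreal_mult[symmetric] ennreal_leI)
    then show ?thesis
      using \<open>L < \<bar>s\<bar>\<close> False by (simp add: tail_weight_eq)
  qed
qed (simp add: tail_weight_eq)

lemma gap_powr_le:
  assumes ab: "a < b" and L: "L > 0" and p: "p \<ge> 1"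
  shows "ennreal ((b - a) powr p)
    \<le> ennreal ((2 * L) powr (p - 1) * (clip L b - clip L a))
       + ennreal (2 powr p) * (tail_weight p L a + tail_weight p L b)"
proof (cases "\<bar>a\<bar> \<le> L \<and> \<bar>b\<bar> \<le> L")
  case True
  have "(b - a) powr p = (b - a) powr (p - 1) * (b - a)"
    using ab by (simp add: powr_diff)
  also have "\<dots> \<le> (2 * L) powr (p - 1) * (b - a)"
    using ab True p by (intro mult_right_mono powr_mono2) auto
  finally have "(b - a) powr p \<le> (2 * L) powr (p - 1) * (clip L b - clip L a)"
    using True by (simp add: clip_eq_self)
  then show ?thesis
    by (simp add: ennreal_leI add_increasing2)
next
  case False
  define m where "m = max \<bar>a\<bar> \<bar>b\<bar>"
  have mL: "m > L"
    using False by (auto simp: m_def)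
  have "(b - a) powr p \<le> (2 * m) powr p"
    using ab p by (intro powr_mono2) (auto simp: m_def)
  also have "\<dots> = 2 powr p * m powr p"
    using mL L by (simp add: powr_mult)
  finally have "ennreal ((b - a) powr p) \<le> ennreal (2 powr p) * ennreal (m powr p)"
    by (simp add: ennreal_mult[symmetric] ennreal_leI)
  also have "ennreal (m powr p) \<le> tail_weight p L a + tail_weight p L b"
    using mL by (cases "\<bar>a\<bar> \<le> \<bar>b\<bar>") (auto simp: m_def tail_weight_eq)
  finally show ?thesis
    by (simp add: mult_left_mono add_increasing)
qed

definition moment_tail :: "real \<Rightarrow> real measure \<Rightarrow> real \<Rightarrow> ennreal" where
  "moment_tail p \<nu> L = (\<integral>\<^sup>+ t. tail_weight p L t \<partial>\<nu>)"

lemma moment_tail_antimono: "L \<le> L' \<Longrightarrow> moment_tail p \<nu> L' \<le> moment_tail p \<nu> L"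
  unfolding moment_tail_def by (intro nn_integral_mono tail_weight_antimono)

lemma equi_int_moments_iff:
  "equi_int_moments p \<nu>s \<longleftrightarrow>
     (\<forall>\<epsilon>>0. \<exists>L>0. eventually (\<lambda>N. moment_tail p (\<nu>s N) L < ennreal \<epsilon>) sequentially)"
proof -
  let ?T = "\<lambda>L N. moment_tail p (\<nu>s N) L"
  have "equi_int_moments p \<nu>s \<longleftrightarrow> (\<forall>\<epsilon>>0. \<exists>L>0. limsup (?T L) < ennreal \<epsilon>)"
    by (simp add: equi_int_moments_def moment_tail_def tail_weight_def)
  also have "\<dots> \<longleftrightarrow> (\<forall>\<epsilon>>0. \<exists>L>0. eventually (\<lambda>N. ?T L N < ennreal \<epsilon>) sequentially)"
  proof (intro iffI allI impI)
    fix \<epsilon> :: real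
    assume "\<forall>\<epsilon>>0. \<exists>L>0. limsup (?T L) < ennreal \<epsilon>" and "\<epsilon> > 0"
    then show "\<exists>L>0. eventually (\<lambda>N. ?T L N < ennreal \<epsilon>) sequentially"
      using Limsup_lessD by blast
  next
    fix \<epsilon> :: real
    assume "\<forall>\<epsilon>>0. \<exists>L>0. eventually (\<lambda>N. ?T L N < ennreal \<epsilon>) sequentially" and "\<epsilon> > 0"
    then obtain L where "L > 0" and ev: "eventually (\<lambda>N. ?T L N < ennreal (\<epsilon> / 2)) sequentially"
      using half_gt_zero by blast
    have "limsup (?T L) \<le> ennreal (\<epsilon> / 2)"
      using ev by (intro Limsup_bounded) (auto elim: eventually_mono)
    also have "\<dots> < ennreal \<epsilon>"
      using \<open>\<epsilon> > 0\<close> by (simp add: ennreal_lessI)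
    finally show "\<exists>L>0. limsup (?T L) < ennreal \<epsilon>"
      using \<open>L > 0\<close> by blast
  qed
  finally show ?thesis .
qed

lemma moment_tail_vanishes:
  assumes sets: "sets \<mu> = sets borel" and fin: "moment_tail p \<mu> 0 < \<infinity>" and "\<epsilon> > 0"
  shows "\<exists>L>0. moment_tail p \<mu> L < ennreal \<epsilon>"
proof -
  have [measurable]: "tail_weight p L \<in> borel_measurable \<mu>" for L
    by (subst measurable_cong_sets[OF sets refl]) simp_all
  have "(\<integral>\<^sup>+ t. (INF n. tail_weight p (real n) t) \<partial>\<mu>) = (INF n. moment_tail p \<mu> (real n))"
    unfolding moment_tail_def
  proof (rule nn_integral_monotone_convergence_INF_AE')
    show "AE t in \<mu>. tail_weight p (real (Suc n)) t \<le> tail_weight p (real n) t" for n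
      by (simp add: tail_weight_antimono)
    show "(\<integral>\<^sup>+ t. tail_weight p (real 0) t \<partial>\<mu>) < \<infinity>"
      using fin by (simp add: moment_tail_def)
  qed simp
  moreover have "(INF n. tail_weight p (real n) t) = 0" for t
  proof -
    obtain n :: nat where "\<bar>t\<bar> < real n"
      using reals_Archimedean2 by blast
    then have "tail_weight p (real n) t = 0"
      by (simp add: tail_weight_eq)
    then show ?thesis
      by (metis INF_lower UNIV_I le_zero_eq)
  qed
  ultimately have "(INF n. moment_tail p \<mu> (real n)) < ennreal \<epsilon>"
    using \<open>\<epsilon> > 0\<close> by simp
  then obtain n where "moment_tail p \<mu> (real n) < ennreal \<epsilon>"
    by (auto simp: INF_less_iff)
  moreover have "moment_tail p \<mu> (real n + 1) \<le> moment_tail p \<mu> (real n)"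
    by (rule moment_tail_antimono) simp
  ultimately show ?thesis
    by (intro exI[of _ "real n + 1"]) auto
qed

lemma tendsto_zero_ennreal_iff:
  fixes f :: "'a \<Rightarrow> ennreal"
  shows "(f \<longlongrightarrow> 0) F \<longleftrightarrow> (\<forall>\<epsilon>>0. eventually (\<lambda>n. f n < ennreal \<epsilon>) F)"
proof
  assume "(f \<longlongrightarrow> 0) F"
  then show "\<forall>\<epsilon>>0. eventually (\<lambda>n. f n < ennreal \<epsilon>) F"
    using order_tendstoD(2)[of f 0 F] by simp
next
  assume small: "\<forall>\<epsilon>>0. eventually (\<lambda>n. f n < ennreal \<epsilon>) F"
  show "(f \<longlongrightarrow> 0) F"
  proof (rule order_tendstoI)
    fix a :: ennreal
    assume "0 < a"
    then show "eventually (\<lambda>n. f n < a) F"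
    proof (cases a)
      case top
      then show ?thesis
        using small[rule_format, of 1]
        by (auto elim!: eventually_mono) (metis ennreal_1 ennreal_less_top order.strict_trans)
    qed (use small in auto)
  qed simp
qed

section \<open>Couplings and the Wasserstein cost\<close>

lemma nn_integral_cmult_add:
  assumes "f \<in> borel_measurable M" "g \<in> borel_measurable M"
  shows "(\<integral>\<^sup>+ z. c * (f z + g z) \<partial>M) = c * ((\<integral>\<^sup>+ z. f z \<partial>M) + (\<integral>\<^sup>+ z. g z \<partial>M))"
  using assms by (simp add: nn_integral_cmult nn_integral_add)

definition coupling_cost :: "real \<Rightarrow> (real \<times> real) measure \<Rightarrow> ennreal" where
  "coupling_cost p \<pi> = (\<integral>\<^sup>+ z. ennreal (\<bar>fst z - snd z\<bar> powr p) \<partial>\<pi>)"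

lemma wass_cost_le_coupling_cost: "\<pi> \<in> couplings \<nu> \<mu> \<Longrightarrow> wass_cost p \<nu> \<mu> \<le> coupling_cost p \<pi>"
  unfolding wass_cost_def coupling_cost_def by (rule INF_lower)

lemma wass_cost_less_iff: "wass_cost p \<nu> \<mu> < c \<longleftrightarrow> (\<exists>\<pi>\<in>couplings \<nu> \<mu>. coupling_cost p \<pi> < c)"
  unfolding wass_cost_def coupling_cost_def by (rule INF_less_iff)

lemma couplingsD:
  assumes "\<pi> \<in> couplings \<mu> \<nu>"
  shows "sets \<pi> = sets (borel \<Otimes>\<^sub>M borel)" "distr \<pi> borel fst = \<mu>" "distr \<pi> borel snd = \<nu>"
  using assms by (auto simp: couplings_def)

lemma measurable_coupling:
  assumes "\<pi> \<in> couplings \<mu> \<nu>" "f \<in> measurable (borel \<Otimes>\<^sub>M borel) M"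
  shows "f \<in> measurable \<pi> M"
  using assms(2) measurable_cong_sets[OF couplingsD(1)[OF assms(1)] refl] by blast

lemma nn_integral_coupling_fst:
  assumes \<pi>: "\<pi> \<in> couplings \<mu> \<nu>" and [measurable]: "g \<in> borel_measurable borel"
  shows "(\<integral>\<^sup>+ z. g (fst z) \<partial>\<pi>) = (\<integral>\<^sup>+ s. g s \<partial>\<mu>)"
proof -
  have "fst \<in> measurable \<pi> borel"
    by (rule measurable_coupling[OF \<pi>]) simp
  then have "(\<integral>\<^sup>+ z. g (fst z) \<partial>\<pi>) = (\<integral>\<^sup>+ s. g s \<partial>distr \<pi> borel fst)"
    by (simp add: nn_integral_distr)
  then show ?thesis
    using couplingsD(2)[OF \<pi>] by simp
qed

lemma nn_integral_coupling_snd: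
  assumes \<pi>: "\<pi> \<in> couplings \<mu> \<nu>" and [measurable]: "g \<in> borel_measurable borel"
  shows "(\<integral>\<^sup>+ z. g (snd z) \<partial>\<pi>) = (\<integral>\<^sup>+ t. g t \<partial>\<nu>)"
proof -
  have "snd \<in> measurable \<pi> borel"
    by (rule measurable_coupling[OF \<pi>]) simp
  then have "(\<integral>\<^sup>+ z. g (snd z) \<partial>\<pi>) = (\<integral>\<^sup>+ t. g t \<partial>distr \<pi> borel snd)"
    by (simp add: nn_integral_distr)
  then show ?thesis
    using couplingsD(3)[OF \<pi>] by simp
qed

lemma emeasure_distr_eq_nn_integral:
  assumes "f \<in> measurable M N" "A \<in> sets N"
  shows "emeasure (distr M N f) A = (\<integral>\<^sup>+ z. indicator A (f z) \<partial>M)"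
proof -
  have "emeasure (distr M N f) A = emeasure M (f -` A \<inter> space M)"
    using assms by (rule emeasure_distr)
  also have "\<dots> = (\<integral>\<^sup>+ z. indicator (f -` A \<inter> space M) z \<partial>M)"
    using measurable_sets[OF assms] by (rule nn_integral_indicator[symmetric])
  also have "\<dots> = (\<integral>\<^sup>+ z. indicator A (f z) \<partial>M)"
    by (intro nn_integral_cong) (auto simp: indicator_def)
  finally show ?thesis .
qed

lemma AE_coupling_fst:
  assumes \<pi>: "\<pi> \<in> couplings \<nu> \<mu>" and ae: "AE s in \<nu>. s \<in> A" and [measurable]: "A \<in> sets borel"
  shows "AE z in \<pi>. fst z \<in> A"
proof -
  have [measurable]: "fst \<in> measurable \<pi> borel"
    by (rule measurable_coupling[OF \<pi>]) simp
  have "AE s in distr \<pi> borel fst. s \<in> A"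
    using ae unfolding couplingsD(2)[OF \<pi>] .
  then show ?thesis
    by (subst (asm) AE_distr_iff) auto
qed

lemma moment_tail_fst_le_coupling:
  assumes \<pi>: "\<pi> \<in> couplings \<nu> \<mu>" and p: "p \<ge> 0"
  shows "moment_tail p \<nu> L \<le> ennreal (2 powr p) * (coupling_cost p \<pi> + moment_tail p \<mu> (L / 2))"
proof -
  have [measurable]: "(\<lambda>z. \<bar>fst z - snd z\<bar> powr p) \<in> borel_measurable \<pi>"
    "(\<lambda>z. tail_weight p (L / 2) (snd z)) \<in> borel_measurable \<pi>"
    by (rule measurable_coupling[OF \<pi>], measurable)+
  have "moment_tail p \<nu> L = (\<integral>\<^sup>+ z. tail_weight p L (fst z) \<partial>\<pi>)"
    unfolding moment_tail_def by (rule nn_integral_coupling_fst[OF \<pi>, symmetric]) simp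
  also have "\<dots> \<le> (\<integral>\<^sup>+ z. ennreal (2 powr p) *
      (ennreal (\<bar>fst z - snd z\<bar> powr p) + tail_weight p (L / 2) (snd z)) \<partial>\<pi>)"
    by (intro nn_integral_mono tail_weight_le_shift p)
  also have "\<dots> = ennreal (2 powr p) * (coupling_cost p \<pi> + moment_tail p \<mu> (L / 2))"
    unfolding coupling_cost_def moment_tail_def
    by (subst nn_integral_cmult_add) (simp_all add: nn_integral_coupling_snd[OF \<pi>])
  finally show ?thesis .
qed

lemma moment_tail_snd_le_coupling:
  assumes \<pi>: "\<pi> \<in> couplings \<nu> \<mu>" and p: "p \<ge> 0"
  shows "moment_tail p \<mu> L \<le> ennreal (2 powr p) * (coupling_cost p \<pi> + moment_tail p \<nu> (L / 2))"
proof -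
  have [measurable]: "(\<lambda>z. \<bar>fst z - snd z\<bar> powr p) \<in> borel_measurable \<pi>"
    "(\<lambda>z. tail_weight p (L / 2) (fst z)) \<in> borel_measurable \<pi>"
    by (rule measurable_coupling[OF \<pi>], measurable)+
  have "moment_tail p \<mu> L = (\<integral>\<^sup>+ z. tail_weight p L (snd z) \<partial>\<pi>)"
    unfolding moment_tail_def by (rule nn_integral_coupling_snd[OF \<pi>, symmetric]) simp
  also have "\<dots> \<le> (\<integral>\<^sup>+ z. ennreal (2 powr p) *
      (ennreal (\<bar>fst z - snd z\<bar> powr p) + tail_weight p (L / 2) (fst z)) \<partial>\<pi>)"
    using tail_weight_le_shift[OF p] by (intro nn_integral_mono) (metis abs_minus_commute)
  also have "\<dots> = ennreal (2 powr p) * (coupling_cost p \<pi> + moment_tail p \<nu> (L / 2))"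
    unfolding coupling_cost_def moment_tail_def
    by (subst nn_integral_cmult_add) (simp_all add: nn_integral_coupling_fst[OF \<pi>])
  finally show ?thesis .
qed

lemma wass_cost_distr_le:
  assumes \<pi>: "\<pi> \<in> couplings \<nu> \<mu>" and [measurable]: "T \<in> borel_measurable borel" and p: "p \<ge> 0"
  shows "wass_cost p (distr \<nu> borel T) \<mu>
    \<le> ennreal (2 powr p) * ((\<integral>\<^sup>+ y. ennreal (\<bar>T y - y\<bar> powr p) \<partial>\<nu>) + coupling_cost p \<pi>)"
proof -
  define T2 where "T2 z = (T (fst z), snd z)" for z :: "real \<times> real"
  have [measurable]: "T2 \<in> measurable \<pi> (borel \<Otimes>\<^sub>M borel)"
    "fst \<in> measurable \<pi> borel" "snd \<in> measurable \<pi> borel"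
    "(\<lambda>z. ennreal (\<bar>T (fst z) - fst z\<bar> powr p)) \<in> borel_measurable \<pi>"
    "(\<lambda>z. ennreal (\<bar>fst z - snd z\<bar> powr p)) \<in> borel_measurable \<pi>"
    unfolding T2_def by (rule measurable_coupling[OF \<pi>], measurable)+
  define \<sigma> where "\<sigma> = distr \<pi> (borel \<Otimes>\<^sub>M borel) T2"
  have "distr \<sigma> borel fst = distr (distr \<pi> borel fst) borel T"
    unfolding \<sigma>_def by (simp add: distr_distr comp_def T2_def)
  moreover have "distr \<sigma> borel snd = distr \<pi> borel snd"
    unfolding \<sigma>_def by (simp add: distr_distr comp_def T2_def)
  ultimately have "\<sigma> \<in> couplings (distr \<nu> borel T) \<mu>"
    using couplingsD[OF \<pi>] by (simp add: couplings_def \<sigma>_def)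
  then have "wass_cost p (distr \<nu> borel T) \<mu> \<le> coupling_cost p \<sigma>"
    by (rule wass_cost_le_coupling_cost)
  also have "coupling_cost p \<sigma> = (\<integral>\<^sup>+ z. ennreal (\<bar>T (fst z) - snd z\<bar> powr p) \<partial>\<pi>)"
    unfolding coupling_cost_def \<sigma>_def by (simp add: nn_integral_distr T2_def)
  also have "\<dots> \<le> (\<integral>\<^sup>+ z. ennreal (2 powr p) *
      (ennreal (\<bar>T (fst z) - fst z\<bar> powr p) + ennreal (\<bar>fst z - snd z\<bar> powr p)) \<partial>\<pi>)"
    by (intro nn_integral_mono ennreal_abs_diff_powr_le p)
  also have "\<dots> = ennreal (2 powr p) * ((\<integral>\<^sup>+ y. ennreal (\<bar>T y - y\<bar> powr p) \<partial>\<nu>) + coupling_cost p \<pi>)"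
    unfolding coupling_cost_def
    by (subst nn_integral_cmult_add)
      (simp_all add: nn_integral_coupling_fst[OF \<pi>, where g = "\<lambda>y. ennreal (\<bar>T y - y\<bar> powr p)"])
  finally show ?thesis .
qed

lemma Wp_less_iff:
  assumes p: "p > 0" and \<epsilon>: "\<epsilon> > 0"
  shows "Wp p \<nu> \<mu> < ennreal \<epsilon> \<longleftrightarrow> wass_cost p \<nu> \<mu> < ennreal (\<epsilon> powr p)"
proof (cases "wass_cost p \<nu> \<mu>")
  case (real r)
  then have r: "r \<ge> 0" "wass_cost p \<nu> \<mu> \<noteq> \<infinity>"
    by auto
  have "r powr (1 / p) < \<epsilon> \<longleftrightarrow> r < \<epsilon> powr p"
  proof
    assume "r powr (1 / p) < \<epsilon>"
    then have "(r powr (1 / p)) powr p < \<epsilon> powr p"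
      using p by (intro powr_less_mono2) auto
    then show "r < \<epsilon> powr p"
      using p r by (simp add: powr_powr)
  next
    assume "r < \<epsilon> powr p"
    then have "r powr (1 / p) < (\<epsilon> powr p) powr (1 / p)"
      using p r by (intro powr_less_mono2) auto
    then show "r powr (1 / p) < \<epsilon>"
      using p \<epsilon> by (simp add: powr_powr)
  qed
  then show ?thesis
    using real r \<epsilon> by (simp add: Wp_def ennreal_less_iff)
qed (simp add: Wp_def)

lemma Wp_tendsto_0_iff:
  assumes p: "p > 0"
  shows "((\<lambda>N. Wp p (\<nu>s N) \<mu>) \<longlonglongrightarrow> 0) \<longleftrightarrow> ((\<lambda>N. wass_cost p (\<nu>s N) \<mu>) \<longlonglongrightarrow> 0)"
  unfolding tendsto_zero_ennreal_iff
proof (intro iffI allI impI)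
  fix \<epsilon> :: real
  assume "\<forall>\<epsilon>>0. eventually (\<lambda>N. Wp p (\<nu>s N) \<mu> < ennreal \<epsilon>) sequentially" and \<epsilon>: "\<epsilon> > 0"
  then have "eventually (\<lambda>N. Wp p (\<nu>s N) \<mu> < ennreal (\<epsilon> powr (1 / p))) sequentially"
    by simp
  moreover have "(\<epsilon> powr (1 / p)) powr p = \<epsilon>"
    using p \<epsilon> by (simp add: powr_powr)
  ultimately show "eventually (\<lambda>N. wass_cost p (\<nu>s N) \<mu> < ennreal \<epsilon>) sequentially"
    using Wp_less_iff[OF p, of "\<epsilon> powr (1 / p)"] \<epsilon> by (auto elim!: eventually_mono)
next
  fix \<epsilon> :: real
  assume "\<forall>\<epsilon>>0. eventually (\<lambda>N. wass_cost p (\<nu>s N) \<mu> < ennreal \<epsilon>) sequentially" and \<epsilon>: "\<epsilon> > 0"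
  then have "eventually (\<lambda>N. wass_cost p (\<nu>s N) \<mu> < ennreal (\<epsilon> powr p)) sequentially"
    by simp
  then show "eventually (\<lambda>N. Wp p (\<nu>s N) \<mu> < ennreal \<epsilon>) sequentially"
    using Wp_less_iff[OF p \<epsilon>] by (auto elim!: eventually_mono)
qed

lemma finite_moment_of_wass_cost_tendsto:
  assumes W: "(\<lambda>N. wass_cost p (\<nu>s N) \<mu>) \<longlonglongrightarrow> 0" and p: "p \<ge> 0"
    and fin: "eventually (\<lambda>N. moment_tail p (\<nu>s N) 0 < \<infinity>) sequentially"
  shows "moment_tail p \<mu> 0 < \<infinity>"
proof -
  have "eventually (\<lambda>N. wass_cost p (\<nu>s N) \<mu> < ennreal 1) sequentially"
    using W zero_less_one unfolding tendsto_zero_ennreal_iff by blast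
  with fin obtain N where fin_N: "moment_tail p (\<nu>s N) 0 < \<infinity>" and "wass_cost p (\<nu>s N) \<mu> < ennreal 1"
    using eventually_happens'[OF sequentially_bot eventually_conj] by blast
  then obtain \<pi> where \<pi>: "\<pi> \<in> couplings (\<nu>s N) \<mu>" "coupling_cost p \<pi> < ennreal 1"
    by (auto simp: wass_cost_less_iff)
  have "moment_tail p \<mu> 0 \<le> ennreal (2 powr p) * (coupling_cost p \<pi> + moment_tail p (\<nu>s N) 0)"
    using moment_tail_snd_le_coupling[OF \<pi>(1) p, of 0] by simp
  also have "\<dots> < \<infinity>"
    using order.strict_trans[OF \<pi>(2) ennreal_less_top] fin_N by (simp add: ennreal_mult_less_top)
  finally show ?thesis .
qed

lemma equi_int_moments_of_wass_cost:
  assumes W: "(\<lambda>N. wass_cost p (\<nu>s N) \<mu>) \<longlonglongrightarrow> 0" and p: "p \<ge> 0" and sets: "sets \<mu> = sets borel"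
    and fin: "eventually (\<lambda>N. moment_tail p (\<nu>s N) 0 < \<infinity>) sequentially"
  shows "equi_int_moments p \<nu>s"
  unfolding equi_int_moments_iff
proof (intro allI impI)
  fix \<epsilon> :: real
  assume "\<epsilon> > 0"
  define \<delta> where "\<delta> = \<epsilon> / 2 / 2 powr p"
  have \<delta>: "\<delta> > 0" "2 powr p * (\<delta> + \<delta>) = \<epsilon>"
    using \<open>\<epsilon> > 0\<close> by (simp_all add: \<delta>_def)
  obtain L where L: "L > 0" "moment_tail p \<mu> L < ennreal \<delta>"
    using moment_tail_vanishes[OF sets finite_moment_of_wass_cost_tendsto[OF W p fin] \<delta>(1)] by blast
  have "eventually (\<lambda>N. wass_cost p (\<nu>s N) \<mu> < ennreal \<delta>) sequentially"
    using W \<delta>(1) unfolding tendsto_zero_ennreal_iff by blast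
  then have "eventually (\<lambda>N. moment_tail p (\<nu>s N) (2 * L) < ennreal \<epsilon>) sequentially"
  proof (rule eventually_mono)
    fix N
    assume "wass_cost p (\<nu>s N) \<mu> < ennreal \<delta>"
    then obtain \<pi> where \<pi>: "\<pi> \<in> couplings (\<nu>s N) \<mu>" "coupling_cost p \<pi> < ennreal \<delta>"
      by (auto simp: wass_cost_less_iff)
    have "moment_tail p (\<nu>s N) (2 * L) \<le> ennreal (2 powr p) * (coupling_cost p \<pi> + moment_tail p \<mu> L)"
      using moment_tail_fst_le_coupling[OF \<pi>(1) p, of "2 * L"] by simp
    also have "\<dots> < ennreal \<epsilon>"
      using ennreal_mult_less_mult[OF _ add_mono_ennreal[OF \<pi>(2) L(2)], of "2 powr p"] \<delta> by simp
    finally show "moment_tail p (\<nu>s N) (2 * L) < ennreal \<epsilon>" .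
  qed
  then show "\<exists>L>0. eventually (\<lambda>N. moment_tail p (\<nu>s N) L < ennreal \<epsilon>) sequentially"
    using L by (intro exI[of _ "2 * L"]) auto
qed

lemma wass_cost_tendsto_0_transfer:
  assumes e: "e \<longlonglongrightarrow> 0" and W: "(\<lambda>N. wass_cost p (\<nu> N) \<mu>) \<longlonglongrightarrow> 0"
    and bound: "eventually (\<lambda>N. \<forall>\<pi>\<in>couplings (\<nu> N) \<mu>.
      wass_cost p (\<nu>' N) \<mu> \<le> ennreal (2 powr p) * (e N + coupling_cost p \<pi>)) sequentially"
  shows "(\<lambda>N. wass_cost p (\<nu>' N) \<mu>) \<longlonglongrightarrow> 0"
  unfolding tendsto_zero_ennreal_iff
proof (intro allI impI)
  fix \<epsilon> :: real
  assume "\<epsilon> > 0"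
  define \<delta> where "\<delta> = \<epsilon> / 2 / 2 powr p"
  have \<delta>: "\<delta> > 0" "2 powr p * (\<delta> + \<delta>) = \<epsilon>"
    using \<open>\<epsilon> > 0\<close> by (simp_all add: \<delta>_def)
  have "eventually (\<lambda>N. e N < ennreal \<delta>) sequentially"
    "eventually (\<lambda>N. wass_cost p (\<nu> N) \<mu> < ennreal \<delta>) sequentially"
    using e W \<delta>(1) unfolding tendsto_zero_ennreal_iff by blast+
  with bound show "eventually (\<lambda>N. wass_cost p (\<nu>' N) \<mu> < ennreal \<epsilon>) sequentially"
  proof eventually_elim
    case (elim N)
    obtain \<pi> where \<pi>: "\<pi> \<in> couplings (\<nu> N) \<mu>" "coupling_cost p \<pi> < ennreal \<delta>"
      using elim(3) by (auto simp: wass_cost_less_iff)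
    have "wass_cost p (\<nu>' N) \<mu> \<le> ennreal (2 powr p) * (e N + coupling_cost p \<pi>)"
      using elim(1) \<pi>(1) by (rule bspec)
    also have "\<dots> < ennreal \<epsilon>"
      using ennreal_mult_less_mult[OF _ add_mono_ennreal[OF elim(2) \<pi>(2)], of "2 powr p"] \<delta> by simp
    finally show ?case .
  qed
qed

lemma compact_support_clip:
  fixes f :: "real \<Rightarrow> real"
  assumes "compact (closure {t. f t \<noteq> 0})"
  obtains L where "L > 0" "\<And>y. f (clip L y) = f y"
proof -
  obtain L0 where L0: "\<And>y. y \<in> closure {t. f t \<noteq> 0} \<Longrightarrow> \<bar>y\<bar> \<le> L0"
    using compact_imp_bounded[OF assms] unfolding bounded_iff by auto
  define L where "L = max L0 0 + 1"
  have L: "L > 0"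
    by (simp add: L_def add_nonneg_pos)
  have vanish: "f y = 0" if "L \<le> \<bar>y\<bar>" for y
    using L0[of y] closure_subset[of "{t. f t \<noteq> 0}"] that by (force simp: L_def)
  have "f (clip L y) = f y" for y
  proof (cases "\<bar>y\<bar> \<le> L")
    case False
    then have "\<bar>clip L y\<bar> = L"
      using L by (auto simp: clip_def)
    then show ?thesis
      using vanish[of y] vanish[of "clip L y"] False by simp
  qed (simp add: clip_eq_self)
  with L show ?thesis
    by (rule that)
qed

lemma continuous_compact_support_bounded:
  fixes f :: "real \<Rightarrow> real"
  assumes "continuous_on UNIV f" "compact (closure {t. f t \<noteq> 0})"
  obtains B where "\<And>y. \<bar>f y\<bar> \<le> B"
proof -
  obtain L where L: "L > 0" and clip: "\<And>y. f (clip L y) = f y"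
    using compact_support_clip[OF assms(2)] by blast
  have "bounded (f ` {-L..L})"
    by (intro compact_imp_bounded compact_continuous_image continuous_on_subset[OF assms(1)]) auto
  then obtain B where B: "\<And>t. t \<in> {-L..L} \<Longrightarrow> \<bar>f t\<bar> \<le> B"
    unfolding bounded_iff by (auto simp del: atLeastAtMost_iff)
  have "\<bar>f y\<bar> \<le> B" for y
    using B[OF clip_in_interval[of L y]] clip[of y] L by simp
  then show ?thesis
    by (rule that)
qed

lemma compact_support_modulus:
  fixes f :: "real \<Rightarrow> real"
  assumes cont: "continuous_on UNIV f" and supp: "compact (closure {t. f t \<noteq> 0})" and "\<epsilon> > 0"
  obtains L K where "L > 0" "K \<ge> 0" "\<And>s t. \<bar>f s - f t\<bar> \<le> \<epsilon> + K * \<bar>clip L s - clip L t\<bar>"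
proof -
  obtain L where L: "L > 0" and clip: "\<And>y. f (clip L y) = f y"
    using compact_support_clip[OF supp] by blast
  obtain B where B: "\<And>y. \<bar>f y\<bar> \<le> B"
    using continuous_compact_support_bounded[OF cont supp] by blast
  have "uniformly_continuous_on {-L..L} f"
    by (intro compact_uniformly_continuous continuous_on_subset[OF cont]) auto
  then obtain \<delta> where \<delta>: "\<delta> > 0"
    and close: "\<And>s t. s \<in> {-L..L} \<Longrightarrow> t \<in> {-L..L} \<Longrightarrow> \<bar>t - s\<bar> < \<delta> \<Longrightarrow> \<bar>f t - f s\<bar> < \<epsilon>"
    using \<open>\<epsilon> > 0\<close> unfolding uniformly_continuous_on_def dist_real_def by metis
  define K where "K = 2 * B / \<delta>"
  have K: "K \<ge> 0"
    using B[of 0] \<delta> by (simp add: K_def)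
  have "\<bar>f s - f t\<bar> \<le> \<epsilon> + K * \<bar>clip L s - clip L t\<bar>" for s t
  proof (cases "\<bar>clip L s - clip L t\<bar> < \<delta>")
    case True
    then have "\<bar>f (clip L s) - f (clip L t)\<bar> < \<epsilon>"
      using close[OF clip_in_interval clip_in_interval] L by (simp add: abs_minus_commute)
    then show ?thesis
      using K clip by (simp add: add_increasing2)
  next
    case False
    have "\<bar>f s - f t\<bar> \<le> 2 * B"
      using B[of s] B[of t] by linarith
    also have "2 * B = K * \<delta>"
      using \<delta> by (simp add: K_def)
    also have "K * \<delta> \<le> K * \<bar>clip L s - clip L t\<bar>"
      using False K by (intro mult_left_mono) auto
    finally show ?thesis
      using \<open>\<epsilon> > 0\<close> by linarith
  qed
  with L K show ?thesis
    by (rule that)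
qed

section \<open>The empirical and the piecewise constant measure\<close>

lemma find_piece:
  fixes f :: "nat \<Rightarrow> real"
  assumes "f 0 < y" "y \<le> f n"
  shows "\<exists>i<n. f i < y \<and> y \<le> f (Suc i)"
  using assms
proof (induction n)
  case (Suc n)
  then show ?case
    by (cases "y \<le> f n") (auto intro: less_SucI)
qed simp

lemma sets_EM[simp, measurable_cong]: "sets (EM N x) = sets borel"
  by (simp add: EM_def)

lemma space_EM[simp]: "space (EM N x) = UNIV"
  by (simp add: EM_def)

lemma nn_integral_EM:
  assumes [measurable]: "g \<in> borel_measurable borel"
  shows "(\<integral>\<^sup>+ t. g t \<partial>EM N x) = (\<Sum>k\<le>N. g (x k)) * ennreal (1 / (real N + 1))"
proof -
  have "(\<integral>\<^sup>+ t. g t \<partial>EM N x) = (\<integral>\<^sup>+ k. g (x k) \<partial>uniform_measure (count_space {..N}) {..N})"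
    unfolding EM_def by (subst nn_integral_distr) auto
  also have "\<dots> = (\<Sum>k\<le>N. g (x k)) / of_nat (N + 1)"
    by (simp add: nn_integral_uniform_measure nn_integral_count_space_finite)
  also have "\<dots> = (\<Sum>k\<le>N. g (x k)) * inverse (ennreal (real (N + 1)))"
    by (simp only: divide_ennreal_def ennreal_of_nat_eq_real_of_nat)
  also have "inverse (ennreal (real (N + 1))) = ennreal (1 / (real N + 1))"
    by (subst inverse_ennreal) (auto simp: inverse_eq_divide)
  finally show ?thesis
    by (simp add: add.commute)
qed

lemma real_distribution_EM: "real_distribution (EM N x)"
proof (intro real_distribution.intro prob_spaceI real_distribution_axioms.intro)
  have "emeasure (EM N x) UNIV = (\<Sum>k\<le>N. ennreal (1 / (real N + 1)))"
    using nn_integral_EM[of "indicator UNIV" N x] by (simp add: sum_distrib_right add.commute)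
  also have "\<dots> = ennreal (real (N + 1) * (1 / (real N + 1)))"
    by (subst ennreal_mult) (auto simp: ennreal_of_nat_eq_real_of_nat)
  also have "\<dots> = 1"
    by simp
  finally show "emeasure (EM N x) (space (EM N x)) = 1"
    by simp
qed simp

lemma AE_EM_range: "AE t in EM N x. t \<in> x ` {..N}"
proof -
  have [measurable]: "x ` {..N} \<in> sets borel"
    by (intro borel_closed finite_imp_closed) simp
  show ?thesis
    unfolding EM_def by (subst AE_distr_iff) (auto intro!: AE_I2)
qed

lemma sets_PC[simp, measurable_cong]: "sets (PC N x) = sets borel"
  by (simp add: PC_def)

lemma space_PC[simp]: "space (PC N x) = UNIV"
  by (simp add: PC_def)

lemma emeasure_PC:
  assumes [measurable]: "A \<in> sets borel"
  shows "emeasure (PC N x) A = (\<Sum>i<N. ennreal (RN N x i) * emeasure lborel ({x i..x (Suc i)} \<inter> A))"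
proof -
  have "emeasure (PC N x) A
      = (\<integral>\<^sup>+ t. (\<Sum>i<N. ennreal (RN N x i) * indicator {x i..x (Suc i)} t) * indicator A t \<partial>lborel)"
    unfolding PC_def by (subst emeasure_density) measurable
  also have "\<dots> = (\<integral>\<^sup>+ t. (\<Sum>i<N. ennreal (RN N x i) * indicator ({x i..x (Suc i)} \<inter> A) t) \<partial>lborel)"
    by (intro nn_integral_cong) (auto simp: sum_distrib_right indicator_def)
  also have "\<dots> = (\<Sum>i<N. ennreal (RN N x i) * emeasure lborel ({x i..x (Suc i)} \<inter> A))"
    by (subst nn_integral_sum) (auto simp: nn_integral_cmult_indicator)
  finally show ?thesis .
qed

locale config =
  fixes N :: nat and x :: "nat \<Rightarrow> real"
  assumes N_pos: "1 \<le> N" and x_less_Suc: "\<And>i. i < N \<Longrightarrow> x i < x (Suc i)"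
begin

lemma x_mono: "i \<le> j \<Longrightarrow> j \<le> N \<Longrightarrow> x i \<le> x j"
proof (induction j)
  case (Suc j)
  then show ?case
    using x_less_Suc[of j] by (cases "i = Suc j") force+
qed simp

lemma x_strict_mono: "i < j \<Longrightarrow> j \<le> N \<Longrightarrow> x i < x j"
  using x_mono[of "Suc i" j] x_less_Suc[of i] by simp

lemma inj_on_x: "inj_on x {..N}"
  by (auto simp: inj_on_def) (metis linorder_neqE_nat x_strict_mono less_irrefl)

lemma piece_unique:
  assumes "i < N" "j < N" "x i < y" "y \<le> x (Suc i)" "x j < y" "y \<le> x (Suc j)"
  shows "i = j"
  using assms x_mono[of "Suc i" j] x_mono[of "Suc j" i] by (cases i j rule: linorder_cases) auto

lemma RN_pos: "i < N \<Longrightarrow> RN N x i > 0"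
  using x_less_Suc[of i] N_pos by (simp add: RN_def)

lemma RN_mult_gap: "i < N \<Longrightarrow> RN N x i * (x (Suc i) - x i) = 1 / N"
  using x_less_Suc[of i] N_pos by (simp add: RN_def)

sublocale PC: real_distribution "PC N x"
proof (intro real_distribution.intro prob_spaceI real_distribution_axioms.intro)
  have "emeasure (PC N x) UNIV = (\<Sum>i<N. ennreal (RN N x i * (x (Suc i) - x i)))"
    using x_less_Suc RN_pos by (simp add: emeasure_PC ennreal_mult less_imp_le)
  also have "\<dots> = (\<Sum>i<N. ennreal (1 / N))"
    by (simp add: RN_mult_gap)
  also have "\<dots> = ennreal (real N * (1 / N))"
    by (subst ennreal_mult) (auto simp: ennreal_of_nat_eq_real_of_nat)
  also have "\<dots> = 1"
    using N_pos by simp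
  finally show "emeasure (PC N x) (space (PC N x)) = 1"
    by simp
qed simp

sublocale EM: real_distribution "EM N x"
  by (rule real_distribution_EM)

lemma cdf_PC: "cdf (PC N x) z = (\<Sum>i<N. RN N x i * max 0 (min (x (Suc i)) z - x i))"
proof -
  have "{x i..x (Suc i)} \<inter> {..z} = {x i..min (x (Suc i)) z}" for i
    by auto
  then have "emeasure lborel ({x i..x (Suc i)} \<inter> {..z}) = ennreal (max 0 (min (x (Suc i)) z - x i))"
    for i
    by (auto simp: emeasure_lborel_Icc_eq max_def)
  then have "emeasure (PC N x) {..z} = (\<Sum>i<N. ennreal (RN N x i * max 0 (min (x (Suc i)) z - x i)))"
    using RN_pos by (simp add: emeasure_PC ennreal_mult less_imp_le)
  also have "\<dots> = ennreal (\<Sum>i<N. RN N x i * max 0 (min (x (Suc i)) z - x i))"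
    using RN_pos by (intro sum_ennreal) (auto simp: less_imp_le)
  moreover have "0 \<le> (\<Sum>i<N. RN N x i * max 0 (min (x (Suc i)) z - x i))"
    using RN_pos by (auto intro!: sum_nonneg simp: less_imp_le)
  ultimately show ?thesis
    by (simp add: cdf_def measure_def)
qed

lemma cdf_PC_piece:
  assumes j: "j < N" and z: "x j \<le> z" "z \<le> x (Suc j)"
  shows "cdf (PC N x) z = (j + (z - x j) / (x (Suc j) - x j)) / N"
proof -
  define f where
    "f i = (if i < j then 1 / real N else if i = j then (z - x j) / (x (Suc j) - x j) / N else 0)"
    for i
  have "RN N x i * max 0 (min (x (Suc i)) z - x i) = f i" if "i < N" for i
  proof (cases i j rule: linorder_cases)
    case less
    then have "x (Suc i) \<le> z"
      using x_mono[of "Suc i" j] j z by auto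
    then show ?thesis
      using less RN_mult_gap[OF that] x_less_Suc[OF that] by (simp add: f_def max_def min_def)
  next
    case equal
    then show ?thesis
      using z x_less_Suc[OF j] N_pos by (simp add: f_def RN_def max_def min_def field_simps)
  next
    case greater
    then have "x (Suc j) \<le> x i"
      using x_mono[of "Suc j" i] that by auto
    then show ?thesis
      using greater z by (simp add: f_def max_def min_def)
  qed
  then have "cdf (PC N x) z = (\<Sum>i<N. f i)"
    by (simp add: cdf_PC)
  also have "\<dots> = (\<Sum>i<Suc j. f i) + (\<Sum>i\<in>{Suc j..<N}. f i)"
    using j by (metis Suc_le_eq lessThan_atLeast0 sum.atLeastLessThan_concat zero_le)
  also have "(\<Sum>i\<in>{Suc j..<N}. f i) = 0"
    by (auto simp: f_def intro!: sum.neutral)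
  also have "(\<Sum>i<Suc j. f i) = j / N + f j"
    by (simp add: f_def)
  finally show ?thesis
    by (simp add: f_def add_divide_distrib)
qed

lemma cdf_PC_below:
  assumes "z \<le> x 0"
  shows "cdf (PC N x) z = 0"
proof -
  have "max 0 (min (x (Suc i)) z - x i) = 0" if "i < N" for i
    using assms x_mono[of 0 i] that by (auto simp: max_def min_def)
  then show ?thesis
    by (simp add: cdf_PC)
qed

lemma cdf_PC_last: "cdf (PC N x) (x N) = 1"
  using cdf_PC_piece[of "N - 1" "x N"] x_less_Suc[of "N - 1"] N_pos by (simp add: of_nat_diff)

lemma measure_PC_Ioc:
  assumes i: "i < N" and uv: "x i \<le> u" "u \<le> v" "v \<le> x (Suc i)"
  shows "measure (PC N x) {u<..v} = (v - u) / (N * (x (Suc i) - x i))"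
proof (cases "u < v")
  case True
  have "measure (PC N x) {u<..v} = cdf (PC N x) v - cdf (PC N x) u"
    by (rule PC.cdf_diff_eq[OF True, symmetric])
  also have "\<dots> = (v - u) / (N * (x (Suc i) - x i))"
  proof -
    define d where "d = x (Suc i) - x i"
    have "d \<noteq> 0" "real N \<noteq> 0"
      using x_less_Suc[OF i] N_pos by (auto simp: d_def)
    then show ?thesis
      using cdf_PC_piece[OF i, of u] cdf_PC_piece[OF i, of v] uv
      unfolding d_def[symmetric] by (simp add: field_simps)
  qed
  finally show ?thesis .
qed (use uv in simp)

lemma measure_PC_piece: "i < N \<Longrightarrow> measure (PC N x) {x i<..x (Suc i)} = 1 / N"
  using x_less_Suc[of i] by (simp add: measure_PC_Ioc)

lemma AE_PC_range: "AE y in PC N x. x 0 < y \<and> y \<le> x N"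
proof -
  have "measure (PC N x) {x 0<..x N} = 1"
    using PC.cdf_diff_eq[OF x_strict_mono[of 0 N]] N_pos by (simp add: cdf_PC_last cdf_PC_below)
  then show ?thesis
    using PC.AE_in_set_eq_1[of "{x 0<..x N}"] by simp
qed

lemma nn_integral_PC_le:
  assumes [measurable]: "g \<in> borel_measurable borel"
    and le: "\<And>i y. i < N \<Longrightarrow> x i < y \<Longrightarrow> y \<le> x (Suc i) \<Longrightarrow> g y \<le> c i"
  shows "(\<integral>\<^sup>+ y. g y \<partial>PC N x) \<le> (\<Sum>i<N. c i) * ennreal (1 / N)"
proof -
  have "(\<integral>\<^sup>+ y. g y \<partial>PC N x) \<le> (\<integral>\<^sup>+ y. (\<Sum>i<N. c i * indicator {x i<..x (Suc i)} y) \<partial>PC N x)"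
    using AE_PC_range
  proof (intro nn_integral_mono_AE, elim AE_mp, intro AE_I2 impI)
    fix y
    assume "x 0 < y \<and> y \<le> x N"
    then obtain j where j: "j < N" "x j < y" "y \<le> x (Suc j)"
      using find_piece[of x y N] by blast
    have "g y \<le> c j * indicator {x j<..x (Suc j)} y"
      using le[OF j] j by simp
    also have "\<dots> \<le> (\<Sum>i<N. c i * indicator {x i<..x (Suc i)} y)"
      using j by (intro member_le_sum) auto
    finally show "g y \<le> (\<Sum>i<N. c i * indicator {x i<..x (Suc i)} y)" .
  qed
  also have "\<dots> = (\<Sum>i<N. c i * ennreal (1 / N))"
    by (subst nn_integral_sum)
      (auto simp: nn_integral_cmult_indicator PC.emeasure_eq_measure measure_PC_piece)
  finally show ?thesis
    by (simp add: sum_distrib_right)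
qed

lemma sum_nn_integral_pieces_le:
  assumes [measurable]: "g \<in> borel_measurable borel"
  shows "(\<Sum>i<N. \<integral>\<^sup>+ y. g y * indicator {x i<..x (Suc i)} y \<partial>PC N x) \<le> (\<integral>\<^sup>+ y. g y \<partial>PC N x)"
proof -
  have "(\<Sum>i<N. g y * indicator {x i<..x (Suc i)} y) \<le> g y" for y
  proof (cases "\<exists>j<N. x j < y \<and> y \<le> x (Suc j)")
    case True
    then obtain j where j: "j < N" "x j < y" "y \<le> x (Suc j)"
      by blast
    have "(\<Sum>i<N. g y * indicator {x i<..x (Suc i)} y) = (\<Sum>i\<in>{j}. g y * indicator {x i<..x (Suc i)} y)"
      using j piece_unique by (intro sum.mono_neutral_right) (auto simp: indicator_def)
    then show ?thesis
      using j by simp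
  next
    case False
    then have "(\<Sum>i<N. g y * indicator {x i<..x (Suc i)} y) = 0"
      by (intro sum.neutral ballI) (auto simp: indicator_def)
    then show ?thesis
      by (simp only: zero_le)
  qed
  then have "(\<integral>\<^sup>+ y. (\<Sum>i<N. g y * indicator {x i<..x (Suc i)} y) \<partial>PC N x) \<le> (\<integral>\<^sup>+ y. g y \<partial>PC N x)"
    by (intro nn_integral_mono)
  then show ?thesis
    by (subst (asm) nn_integral_sum) auto
qed

section \<open>The transport map\<close>

text \<open>Since \<open>(k - 1) / N < k / (N + 1) \<le> k / N\<close>, the \<open>k / (N + 1)\<close>-quantile of \<^term>\<open>PC N x\<close>
  lies in the \<open>k\<close>-th interval \<open>[x (k - 1), x k]\<close>, at the relative position \<open>(N - k + 1) / (N + 1)\<close>.\<close>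

definition cut :: "nat \<Rightarrow> real" where
  "cut k = x (k - 1) + real (N - k + 1) / (real N + 1) * (x k - x (k - 1))"

lemma cut_between:
  assumes "1 \<le> k" "k \<le> N"
  shows "x (k - 1) < cut k" "cut k < x k"
proof -
  have gap: "x k - x (k - 1) > 0"
    using x_less_Suc[of "k - 1"] assms by simp
  have frac: "0 < real (N - k + 1) / (real N + 1)" "real (N - k + 1) / (real N + 1) < 1"
    using assms by auto
  show "x (k - 1) < cut k"
    unfolding cut_def using gap frac by simp
  have "real (N - k + 1) / (real N + 1) * (x k - x (k - 1)) < 1 * (x k - x (k - 1))"
    using gap frac by (intro mult_strict_right_mono) auto
  then show "cut k < x k"
    unfolding cut_def by simp
qed

lemma cut_strict_mono:
  assumes "1 \<le> a" "a < b" "b \<le> N"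
  shows "cut a < cut b"
proof -
  have "cut a < x a"
    using cut_between assms by auto
  also have "x a \<le> x (b - 1)"
    using assms by (intro x_mono) auto
  also have "x (b - 1) < cut b"
    using cut_between assms by auto
  finally show ?thesis .
qed

lemma cdf_cut:
  assumes "1 \<le> k" "k \<le> N"
  shows "cdf (PC N x) (cut k) = k / (real N + 1)"
proof -
  have gap: "x k - x (k - 1) > 0"
    using x_less_Suc[of "k - 1"] assms by simp
  have "cdf (PC N x) (cut k) = (real (k - 1) + (cut k - x (k - 1)) / (x k - x (k - 1))) / N"
    using cdf_PC_piece[of "k - 1" "cut k"] cut_between[OF assms] assms by simp
  also have "(cut k - x (k - 1)) / (x k - x (k - 1)) = real (N - k + 1) / (real N + 1)"
    using gap unfolding cut_def by simp
  also have "(real (k - 1) + real (N - k + 1) / (real N + 1)) / N = k / (real N + 1)"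
  proof -
    have "real (k - 1) + real (N - k + 1) / (real N + 1) = real k * N / (real N + 1)"
      using assms by (simp add: of_nat_diff field_simps)
    then show ?thesis
      using N_pos by simp
  qed
  finally show ?thesis .
qed

definition cell :: "nat \<Rightarrow> real set" where
  "cell k = {y. (k = 0 \<or> cut k < y) \<and> (k = N \<or> y \<le> cut (Suc k))}"

lemma cell_borel[measurable]: "cell k \<in> sets borel"
proof -
  have "cell k = (if k = 0 then UNIV else {cut k<..}) \<inter> (if k = N then UNIV else {..cut (Suc k)})"
    by (auto simp: cell_def)
  then show ?thesis
    by simp
qed

lemma cell_unique: "k \<le> N \<Longrightarrow> j \<le> N \<Longrightarrow> y \<in> cell k \<Longrightarrow> y \<in> cell j \<Longrightarrow> k = j"
proof (induction k j rule: linorder_wlog)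
  case (le a b)
  show ?case
  proof (rule ccontr)
    assume "a \<noteq> b"
    then have "y \<le> cut (Suc a)" "cut b < y"
      using le by (auto simp: cell_def)
    moreover have "cut (Suc a) \<le> cut b"
      using cut_strict_mono[of "Suc a" b] le \<open>a \<noteq> b\<close> by (cases "Suc a = b") auto
    ultimately show False
      by simp
  qed
qed auto

lemma cell_exists: "\<exists>k\<le>N. y \<in> cell k"
proof -
  consider "y \<le> cut 1" | "cut N < y" | "cut 1 < y" "y \<le> cut N"
    by linarith
  then show ?thesis
  proof cases
    case 3
    then obtain i where "i < N - 1" "cut (Suc i) < y" "y \<le> cut (Suc (Suc i))"
      using find_piece[of "\<lambda>i. cut (Suc i)" y "N - 1"] N_pos by auto
    then show ?thesis
      by (intro exI[of _ "Suc i"]) (auto simp: cell_def)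
  qed (use N_pos in \<open>auto simp: cell_def intro: exI[of _ 0] exI[of _ N]\<close>)
qed

lemma measure_cell:
  assumes "k \<le> N"
  shows "measure (PC N x) (cell k) = 1 / (real N + 1)"
proof -
  consider "k = 0" | "1 \<le> k" "k < N" | "k = N" "k \<noteq> 0"
    using assms N_pos by linarith
  then show ?thesis
  proof cases
    case 1
    then have "cell k = {..cut 1}"
      using N_pos by (auto simp: cell_def)
    then show ?thesis
      using cdf_cut[of 1] N_pos by (simp add: cdf_def)
  next
    case 2
    then have "measure (PC N x) (cell k) = cdf (PC N x) (cut (Suc k)) - cdf (PC N x) (cut k)"
      using PC.cdf_diff_eq[OF cut_strict_mono[of k "Suc k"]] by (simp add: cell_def greaterThanAtMost_def
        atLeast_def atMost_def Int_def conj_commute)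
    also have "\<dots> = (Suc k) / (real N + 1) - k / (real N + 1)"
      using cdf_cut 2 by simp
    finally show ?thesis
      by (simp add: diff_divide_distrib[symmetric])
  next
    case 3
    then have "cell k = UNIV - {..cut N}"
      by (auto simp: cell_def)
    then have "measure (PC N x) (cell k) = 1 - cdf (PC N x) (cut N)"
      using PC.prob_compl[of "{..cut N}"] by (simp add: cdf_def)
    also have "\<dots> = 1 - N / (real N + 1)"
      using cdf_cut[of N] N_pos by simp
    finally show ?thesis
      by (simp add: field_simps)
  qed
qed

lemma emeasure_cell: "k \<le> N \<Longrightarrow> emeasure (PC N x) (cell k) = ennreal (1 / (real N + 1))"
  by (simp add: PC.emeasure_eq_measure measure_cell)

lemma nn_integral_PC_cells:
  assumes [measurable]: "h \<in> borel_measurable borel"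
  shows "(\<integral>\<^sup>+ y. h y \<partial>PC N x) = (\<Sum>k\<le>N. \<integral>\<^sup>+ y. h y * indicator (cell k) y \<partial>PC N x)"
proof -
  have "(\<Sum>k\<le>N. indicator (cell k) y :: ennreal) = 1" for y
  proof -
    obtain j where j: "j \<le> N" "y \<in> cell j"
      using cell_exists by blast
    have "(\<Sum>k\<le>N. indicator (cell k) y :: ennreal) = (\<Sum>k\<in>{j}. indicator (cell k) y)"
      using j cell_unique by (intro sum.mono_neutral_right) (auto simp: indicator_def)
    then show ?thesis
      using j by simp
  qed
  then have "(\<integral>\<^sup>+ y. h y \<partial>PC N x) = (\<integral>\<^sup>+ y. (\<Sum>k\<le>N. h y * indicator (cell k) y) \<partial>PC N x)"
    by (simp add: sum_distrib_left[symmetric])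
  also have "\<dots> = (\<Sum>k\<le>N. \<integral>\<^sup>+ y. h y * indicator (cell k) y \<partial>PC N x)"
    by (subst nn_integral_sum) auto
  finally show ?thesis .
qed

definition transport :: "real \<Rightarrow> real" where
  "transport y = (\<Sum>k\<le>N. x k * indicator (cell k) y)"

lemma borel_measurable_transport[measurable]: "transport \<in> borel_measurable borel"
  unfolding transport_def[abs_def] by measurable

lemma transport_cell: "k \<le> N \<Longrightarrow> y \<in> cell k \<Longrightarrow> transport y = x k"
proof -
  assume k: "k \<le> N" "y \<in> cell k"
  have "transport y = (\<Sum>j\<in>{k}. x j * indicator (cell j) y)"
    unfolding transport_def using k cell_unique
    by (intro sum.mono_neutral_right) (auto simp: indicator_def)
  then show ?thesis
    using k by simp
qed

lemma transport_eq_iff: "k \<le> N \<Longrightarrow> transport y = x k \<longleftrightarrow> y \<in> cell k"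
proof
  assume k: "k \<le> N" "transport y = x k"
  obtain j where j: "j \<le> N" "y \<in> cell j"
    using cell_exists by blast
  then have "x j = x k"
    using transport_cell k by simp
  then show "y \<in> cell k"
    using inj_on_x j k by (auto simp: inj_on_def)
qed (rule transport_cell)

lemma nn_integral_transport:
  assumes [measurable]: "g \<in> borel_measurable borel"
  shows "(\<integral>\<^sup>+ y. g (transport y) \<partial>PC N x) = (\<integral>\<^sup>+ t. g t \<partial>EM N x)"
proof -
  have "(\<integral>\<^sup>+ y. g (transport y) \<partial>PC N x) = (\<Sum>k\<le>N. \<integral>\<^sup>+ y. g (x k) * indicator (cell k) y \<partial>PC N x)"
    by (subst nn_integral_PC_cells)
      (auto intro!: sum.cong nn_integral_cong simp: indicator_def transport_cell)
  also have "\<dots> = (\<integral>\<^sup>+ t. g t \<partial>EM N x)"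
    by (simp add: nn_integral_cmult_indicator emeasure_cell nn_integral_EM sum_distrib_right
        add.commute)
  finally show ?thesis .
qed

lemma distr_PC_transport: "distr (PC N x) borel transport = EM N x"
proof (rule measure_eqI)
  fix A
  assume "A \<in> sets (distr (PC N x) borel transport)"
  then have [measurable]: "A \<in> sets borel"
    by simp
  have "emeasure (distr (PC N x) borel transport) A = emeasure (PC N x) (transport -` A)"
    by (subst emeasure_distr) auto
  also have "\<dots> = (\<integral>\<^sup>+ y. indicator (transport -` A) y \<partial>PC N x)"
    using measurable_sets_borel[OF borel_measurable_transport, of A]
    by (intro nn_integral_indicator[symmetric]) simp
  also have "\<dots> = (\<integral>\<^sup>+ y. indicator A (transport y) \<partial>PC N x)"
    by (simp add: indicator_def)
  also have "\<dots> = emeasure (EM N x) A"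
    by (simp add: nn_integral_transport)
  finally show "emeasure (distr (PC N x) borel transport) A = emeasure (EM N x) A" .
qed simp

lemma transport_piece:
  assumes "i < N" "x i < y" "y \<le> x (Suc i)"
  shows "x i \<le> transport y" "transport y \<le> x (Suc i)"
proof -
  obtain k where k: "k \<le> N" "y \<in> cell k"
    using cell_exists by blast
  have "\<not> k < i"
  proof
    assume "k < i"
    then have "y \<le> cut (Suc k)"
      using k assms by (auto simp: cell_def)
    also have "cut (Suc k) < x (Suc k)"
      using cut_between[of "Suc k"] \<open>k < i\<close> assms by simp
    also have "x (Suc k) \<le> x i"
      using \<open>k < i\<close> assms by (intro x_mono) auto
    finally show False
      using assms by simp
  qed
  moreover have "\<not> Suc i < k"
  proof
    assume "Suc i < k"
    have "x (Suc i) \<le> x (k - 1)"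
      using \<open>Suc i < k\<close> k by (intro x_mono) auto
    also have "x (k - 1) < cut k"
      using cut_between[of k] \<open>Suc i < k\<close> k by simp
    also have "cut k < y"
      using k \<open>Suc i < k\<close> by (auto simp: cell_def)
    finally show False
      using assms by simp
  qed
  ultimately have "transport y = x i \<or> transport y = x (Suc i)"
    using transport_cell k by (metis le_SucE linorder_not_less le_neq_implies_less)
  then show "x i \<le> transport y" "transport y \<le> x (Suc i)"
    using x_less_Suc[OF assms(1)] by auto
qed

lemma transport_dist:
  assumes "i < N" "x i < y" "y \<le> x (Suc i)"
  shows "\<bar>transport y - y\<bar> \<le> x (Suc i) - x i"
  using transport_piece[OF assms] assms by auto

lemma moment_tail_EM:
  "moment_tail p (EM N x) L = (\<Sum>k\<le>N. tail_weight p L (x k)) * ennreal (1 / (real N + 1))"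
  unfolding moment_tail_def by (simp add: nn_integral_EM)

lemma moment_tail_PC_le:
  assumes "p \<ge> 0"
  shows "moment_tail p (PC N x) L \<le> 4 * moment_tail p (EM N x) L"
proof -
  let ?g = "\<lambda>k. tail_weight p L (x k)"
  have "moment_tail p (PC N x) L \<le> (\<Sum>i<N. ?g i + ?g (Suc i)) * ennreal (1 / N)"
    unfolding moment_tail_def by (rule nn_integral_PC_le) (auto intro: tail_weight_le_endpoints assms)
  also have "\<dots> \<le> (2 * (\<Sum>k\<le>N. ?g k)) * (2 * ennreal (1 / (real N + 1)))"
    using N_pos by (intro mult_mono sum_adjacent_le ennreal_inverse_le_twice_inverse_Suc) auto
  also have "\<dots> = 4 * moment_tail p (EM N x) L"
    by (simp add: moment_tail_EM mult_ac)
  finally show ?thesis .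
qed

lemma far_end_subinterval:
  fixes a b :: real
  assumes "a < b"
  defines "m \<equiv> max \<bar>a\<bar> \<bar>b\<bar>"
  obtains u v where "a \<le> u" "u \<le> v" "v \<le> b" "v - u = min (b - a) (m / 2)"
    "\<And>y. u < y \<Longrightarrow> y \<le> v \<Longrightarrow> m / 2 \<le> \<bar>y\<bar>"
proof (cases "\<bar>a\<bar> \<le> \<bar>b\<bar>")
  case True
  then have "m = b"
    using assms by (auto simp: m_def)
  show ?thesis
    by (rule that[of "b - min (b - a) (m / 2)" b]) (use \<open>m = b\<close> assms in auto)
next
  case False
  then have "m = - a"
    using assms by (auto simp: m_def)
  show ?thesis
    by (rule that[of a "a + min (b - a) (m / 2)"]) (use \<open>m = - a\<close> assms in auto)
qed

text \<open>The piece \<open>(x i, x (Suc i)]\<close> has \<open>PC\<close>-mass \<open>1 / N\<close>, and at least a quarter of it lies where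
  \<open>\<bar>y\<bar>\<close> exceeds half of the larger endpoint.\<close>

lemma tail_weight_endpoint_le_piece:
  assumes i: "i < N" and L: "L \<ge> 0" and p: "p \<ge> 0"
    and far: "max \<bar>x i\<bar> \<bar>x (Suc i)\<bar> > 2 * L"
  shows "ennreal (max \<bar>x i\<bar> \<bar>x (Suc i)\<bar> powr p)
     \<le> ennreal (2 powr (p + 2) * N) * (\<integral>\<^sup>+ y. tail_weight p L y * indicator {x i<..x (Suc i)} y \<partial>PC N x)"
proof -
  define m where "m = max \<bar>x i\<bar> \<bar>x (Suc i)\<bar>"
  define l where "l = x (Suc i) - x i"
  define d where "d = min l (m / 2)"
  have l: "l > 0" and m: "m > 0" and d: "d > 0" and "l \<le> 4 * d"
    using x_less_Suc[OF i] far L by (auto simp: l_def m_def d_def min_def max_def abs_if)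
  obtain u v where uv: "x i \<le> u" "u \<le> v" "v \<le> x (Suc i)" "v - u = d"
    and far_uv: "\<And>y. u < y \<Longrightarrow> y \<le> v \<Longrightarrow> m / 2 \<le> \<bar>y\<bar>"
    using far_end_subinterval[OF x_less_Suc[OF i]]
    unfolding m_def[symmetric] l_def[symmetric] d_def[symmetric] by blast
  have "ennreal ((m / 2) powr p) * indicator {u<..v} y
      \<le> tail_weight p L y * indicator {x i<..x (Suc i)} y" for y
  proof (cases "u < y \<and> y \<le> v")
    case True
    then have "m / 2 \<le> \<bar>y\<bar>"
      using far_uv by blast
    moreover have "2 * L < m"
      using far by (simp add: m_def)
    ultimately show ?thesis
      using True uv p m by (auto simp: tail_weight_eq indicator_def intro!: ennreal_leI powr_mono2)
  qed (auto simp: indicator_def)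
  then have lower: "ennreal ((m / 2) powr p) * emeasure (PC N x) {u<..v}
      \<le> (\<integral>\<^sup>+ y. tail_weight p L y * indicator {x i<..x (Suc i)} y \<partial>PC N x)"
    by (subst nn_integral_cmult_indicator[symmetric]) (auto intro: nn_integral_mono)
  have mass: "emeasure (PC N x) {u<..v} = ennreal (d / (N * l))"
    using measure_PC_Ioc[OF i uv(1-3)] uv(4) by (simp add: PC.emeasure_eq_measure l_def)
  have "m powr p \<le> 2 powr (p + 2) * N * ((m / 2) powr p * (d / (N * l)))"
  proof -
    have "m powr p = 2 powr (p + 2) * N * ((m / 2) powr p * (d / (N * l))) * (l / (4 * d))"
      using d l m N_pos by (simp add: powr_divide powr_add field_simps)
    also have "\<dots> \<le> 2 powr (p + 2) * N * ((m / 2) powr p * (d / (N * l)))"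
      using \<open>l \<le> 4 * d\<close> d l m by (intro mult_left_le) auto
    finally show ?thesis .
  qed
  then have "ennreal (m powr p)
      \<le> ennreal (2 powr (p + 2) * N) * (ennreal ((m / 2) powr p) * ennreal (d / (N * l)))"
    using d l by (simp add: ennreal_mult[symmetric] ennreal_leI mult.assoc)
  also have "\<dots> \<le> ennreal (2 powr (p + 2) * N)
      * (\<integral>\<^sup>+ y. tail_weight p L y * indicator {x i<..x (Suc i)} y \<partial>PC N x)"
    using lower mass by (intro mult_left_mono) auto
  finally show ?thesis
    by (simp add: m_def)
qed

lemma moment_tail_EM_le:
  assumes L: "L \<ge> 0" and p: "p \<ge> 0"
  shows "moment_tail p (EM N x) (2 * L) \<le> ennreal (2 powr (p + 3)) * moment_tail p (PC N x) L"
proof -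
  define h where "h k = tail_weight p (2 * L) (x k)" for k
  define C where "C = ennreal (2 * (2 powr (p + 2) * N))"
  define I where "I i = (\<integral>\<^sup>+ y. tail_weight p L y * indicator {x i<..x (Suc i)} y \<partial>PC N x)" for i
  have pieces: "h i + h (Suc i) \<le> C * I i" if i: "i < N" for i
  proof (cases "max \<bar>x i\<bar> \<bar>x (Suc i)\<bar> > 2 * L")
    case True
    have "h i \<le> ennreal (max \<bar>x i\<bar> \<bar>x (Suc i)\<bar> powr p)"
      "h (Suc i) \<le> ennreal (max \<bar>x i\<bar> \<bar>x (Suc i)\<bar> powr p)"
      using p by (auto simp: h_def tail_weight_eq intro!: ennreal_leI powr_mono2)
    then have "h i + h (Suc i) \<le> 2 * ennreal (max \<bar>x i\<bar> \<bar>x (Suc i)\<bar> powr p)"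
      by (simp add: mult_2 add_mono)
    also have "\<dots> \<le> C * I i"
      using tail_weight_endpoint_le_piece[OF i L p True]
      by (simp add: C_def I_def ennreal_mult mult.assoc mult_left_mono)
    finally show ?thesis .
  qed (auto simp: h_def tail_weight_eq)
  have "(\<Sum>k\<le>N. h k) \<le> (\<Sum>i<N. h i + h (Suc i))"
    by (rule sum_le_adjacent[OF N_pos])
  also have "\<dots> \<le> C * (\<Sum>i<N. I i)"
    unfolding sum_distrib_left by (intro sum_mono pieces) simp
  also have "(\<Sum>i<N. I i) \<le> moment_tail p (PC N x) L"
    unfolding I_def moment_tail_def by (rule sum_nn_integral_pieces_le) simp
  finally have "moment_tail p (EM N x) (2 * L)
      \<le> C * moment_tail p (PC N x) L * ennreal (1 / (real N + 1))"
    unfolding moment_tail_EM h_def by (auto simp: mult_left_mono intro: mult_right_mono)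
  also have "C * ennreal (1 / (real N + 1)) \<le> ennreal (2 powr (p + 3))"
  proof -
    have "2 * (2 powr (p + 2) * N) * (1 / (real N + 1)) \<le> 2 powr (p + 3)"
      by (simp add: powr_add field_simps)
    then show ?thesis
      unfolding C_def by (subst ennreal_mult[symmetric]) (auto intro: ennreal_leI)
  qed
  then have "C * moment_tail p (PC N x) L * ennreal (1 / (real N + 1))
      \<le> ennreal (2 powr (p + 3)) * moment_tail p (PC N x) L"
    by (metis mult.commute mult.left_commute mult_right_mono zero_le)
  finally show ?thesis .
qed

lemma moment_tail_EM_finite: "moment_tail p (EM N x) L < \<infinity>"
  by (simp add: moment_tail_EM tail_weight_eq ennreal_mult_less_top)

lemma moment_tail_PC_finite:
  assumes "p \<ge> 0"
  shows "moment_tail p (PC N x) L < \<infinity>"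
  using moment_tail_PC_le[OF assms, of L] moment_tail_EM_finite[of p L]
  by (simp add: ennreal_mult_less_top order.strict_trans1)

lemma sum_gap_powr_le:
  assumes L: "L > 0" and p: "p \<ge> 1"
  shows "(\<Sum>i<N. ennreal ((x (Suc i) - x i) powr p))
    \<le> ennreal ((2 * L) powr p) + ennreal (2 * 2 powr p) * (\<Sum>k\<le>N. tail_weight p L (x k))"
proof -
  let ?g = "\<lambda>k. tail_weight p L (x k)"
  let ?d = "\<lambda>i. clip L (x (Suc i)) - clip L (x i)"
  have d_nonneg: "0 \<le> ?d i" if "i < N" for i
    using clip_mono[OF less_imp_le[OF x_less_Suc[OF that]]] by simp
  have "(\<Sum>i<N. ennreal ((x (Suc i) - x i) powr p))
      \<le> (\<Sum>i<N. ennreal ((2 * L) powr (p - 1) * ?d i) + ennreal (2 powr p) * (?g i + ?g (Suc i)))"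
    using gap_powr_le[OF x_less_Suc L p] by (intro sum_mono) auto
  also have "\<dots> = ennreal ((2 * L) powr (p - 1) * (\<Sum>i<N. ?d i))
      + ennreal (2 powr p) * (\<Sum>i<N. ?g i + ?g (Suc i))"
  proof -
    have "(\<Sum>i<N. ennreal ((2 * L) powr (p - 1) * ?d i)) = ennreal ((2 * L) powr (p - 1) * (\<Sum>i<N. ?d i))"
      using d_nonneg by (subst sum_ennreal) (auto simp: sum_distrib_left)
    moreover have "(\<Sum>i<N. ennreal (2 powr p) * (?g i + ?g (Suc i)))
        = ennreal (2 powr p) * (\<Sum>i<N. ?g i + ?g (Suc i))"
      by (rule sum_distrib_left[symmetric])
    ultimately show ?thesis
      by (simp only: sum.distrib)
  qed
  also have "\<dots> \<le> ennreal ((2 * L) powr (p - 1) * (2 * L)) + ennreal (2 powr p) * (2 * (\<Sum>k\<le>N. ?g k))"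
    using sum_clip_telescope_le[of L x N] L
    by (intro add_mono mult_left_mono ennreal_leI sum_adjacent_le) auto
  also have "\<dots> = ennreal ((2 * L) powr p) + ennreal (2 * 2 powr p) * (\<Sum>k\<le>N. ?g k)"
    using L by (simp add: powr_diff ennreal_mult mult_ac)
  finally show ?thesis .
qed

definition transport_cost :: "real \<Rightarrow> ennreal" where
  "transport_cost p = (\<integral>\<^sup>+ y. ennreal (\<bar>transport y - y\<bar> powr p) \<partial>PC N x)"

lemma transport_cost_le:
  assumes L: "L > 0" and p: "p \<ge> 1"
  shows "transport_cost p
    \<le> ennreal ((2 * L) powr p / N) + ennreal (4 * 2 powr p) * moment_tail p (EM N x) L"
proof -
  let ?G = "\<Sum>k\<le>N. tail_weight p L (x k)"
  have "transport_cost p \<le> (\<Sum>i<N. ennreal ((x (Suc i) - x i) powr p)) * ennreal (1 / N)"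
    unfolding transport_cost_def
    by (rule nn_integral_PC_le) (use transport_dist p in \<open>auto intro!: ennreal_leI powr_mono2\<close>)
  also have "\<dots> \<le> (ennreal ((2 * L) powr p) + ennreal (2 * 2 powr p) * ?G) * ennreal (1 / N)"
    by (intro mult_right_mono sum_gap_powr_le L p) simp
  also have "\<dots> = ennreal ((2 * L) powr p / N) + ennreal (2 * 2 powr p) * (?G * ennreal (1 / N))"
    by (simp add: distrib_right ennreal_mult[symmetric] mult.assoc)
  also have "?G * ennreal (1 / N) \<le> 2 * moment_tail p (EM N x) L"
    using mult_left_mono[OF ennreal_inverse_le_twice_inverse_Suc[OF N_pos], of ?G]
    by (simp add: moment_tail_EM mult_ac)
  also have "ennreal (2 * 2 powr p) * (2 * moment_tail p (EM N x) L)
      = ennreal (4 * 2 powr p) * moment_tail p (EM N x) L"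
    by (simp add: ennreal_mult mult_ac)
  finally show ?thesis
    by (simp add: add_left_mono mult_left_mono)
qed

lemma integral_clip_transport_le:
  assumes L: "L \<ge> 0"
  shows "(\<integral>y. \<bar>clip L y - clip L (transport y)\<bar> \<partial>PC N x) \<le> 2 * L / N"
proof -
  let ?d = "\<lambda>i. clip L (x (Suc i)) - clip L (x i)"
  have d_nonneg: "0 \<le> ?d i" if "i < N" for i
    using clip_mono[OF less_imp_le[OF x_less_Suc[OF that]]] by simp
  have "(\<integral>\<^sup>+ y. ennreal \<bar>clip L y - clip L (transport y)\<bar> \<partial>PC N x)
      \<le> (\<Sum>i<N. ennreal (?d i)) * ennreal (1 / N)"
  proof (rule nn_integral_PC_le)
    fix i y
    assume iy: "i < N" "x i < y" "y \<le> x (Suc i)"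
    then have "clip L (x i) \<le> clip L y" "clip L y \<le> clip L (x (Suc i))"
      "clip L (x i) \<le> clip L (transport y)" "clip L (transport y) \<le> clip L (x (Suc i))"
      using transport_piece[OF iy] by (auto intro: clip_mono)
    then show "ennreal \<bar>clip L y - clip L (transport y)\<bar> \<le> ennreal (?d i)"
      by (intro ennreal_leI) auto
  qed measurable
  also have "\<dots> = ennreal (\<Sum>i<N. ?d i) * ennreal (1 / N)"
    using d_nonneg by (subst sum_ennreal) auto
  also have "\<dots> = ennreal ((\<Sum>i<N. ?d i) * (1 / N))"
    using d_nonneg by (subst ennreal_mult) (auto intro: sum_nonneg)
  also have "\<dots> \<le> ennreal (2 * L / N)"
    using sum_clip_telescope_le[OF L, of x N] by (intro ennreal_leI) (simp add: divide_right_mono)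
  finally have "(\<integral>\<^sup>+ y. ennreal \<bar>clip L y - clip L (transport y)\<bar> \<partial>PC N x) \<le> ennreal (2 * L / N)" .
  then show ?thesis
    using L by (subst integral_eq_nn_integral) (auto simp: enn2real_leI)
qed

lemma integral_PC_EM_diff_le:
  fixes f :: "real \<Rightarrow> real"
  assumes [measurable]: "f \<in> borel_measurable borel" and bounded: "\<And>y. \<bar>f y\<bar> \<le> B"
    and L: "L \<ge> 0" and K: "K \<ge> 0"
    and modulus: "\<And>s t. \<bar>f s - f t\<bar> \<le> \<epsilon> + K * \<bar>clip L s - clip L t\<bar>"
  shows "\<bar>(\<integral>y. f y \<partial>PC N x) - (\<integral>y. f y \<partial>EM N x)\<bar> \<le> \<epsilon> + K * (2 * L / N)"
proof -
  have EM: "(\<integral>y. f y \<partial>EM N x) = (\<integral>y. f (transport y) \<partial>PC N x)"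
    unfolding distr_PC_transport[symmetric] by (rule integral_distr) auto
  have int_f: "integrable (PC N x) f" "integrable (PC N x) (\<lambda>y. f (transport y))"
    by (auto intro!: PC.integrable_const_bound[of _ B] bounded)
  have int_clip: "integrable (PC N x) (\<lambda>y. \<bar>clip L y - clip L (transport y)\<bar>)"
  proof (rule PC.integrable_const_bound[of _ "2 * L"])
    have "\<bar>clip L y - clip L (transport y)\<bar> \<le> 2 * L" for y
      using clip_in_interval[OF L, of y] clip_in_interval[OF L, of "transport y"] by auto
    then show "AE y in PC N x. norm \<bar>clip L y - clip L (transport y)\<bar> \<le> 2 * L"
      by simp
  qed simp
  have "\<bar>(\<integral>y. f y \<partial>PC N x) - (\<integral>y. f (transport y) \<partial>PC N x)\<bar> = \<bar>\<integral>y. f y - f (transport y) \<partial>PC N x\<bar>"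
    using int_f by simp
  also have "\<dots> \<le> (\<integral>y. \<epsilon> + K * \<bar>clip L y - clip L (transport y)\<bar> \<partial>PC N x)"
    using int_f int_clip modulus by (intro integral_abs_bound_integral) auto
  also have "\<dots> = \<epsilon> + K * (\<integral>y. \<bar>clip L y - clip L (transport y)\<bar> \<partial>PC N x)"
    using int_clip PC.prob_space by simp
  also have "\<dots> \<le> \<epsilon> + K * (2 * L / N)"
    using integral_clip_transport_le[OF L] K by (intro add_left_mono mult_left_mono) auto
  finally show ?thesis
    by (simp add: EM)
qed

section \<open>Transport of couplings\<close>

lemma wass_cost_EM_le:
  assumes "\<pi> \<in> couplings (PC N x) \<mu>" "p \<ge> 0"
  shows "wass_cost p (EM N x) \<mu> \<le> ennreal (2 powr p) * (transport_cost p + coupling_cost p \<pi>)"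
  using wass_cost_distr_le[OF assms(1) borel_measurable_transport assms(2)]
  by (simp add: distr_PC_transport transport_cost_def)

text \<open>Gluing a coupling \<open>\<pi>\<close> of \<^term>\<open>EM N x\<close> and \<open>\<mu>\<close> to \<^term>\<open>PC N x\<close> along the transport map:
  given the first coordinate \<open>x k\<close> of \<open>\<pi>\<close>, the new point is drawn from \<^term>\<open>PC N x\<close>
  conditioned on \<^term>\<open>cell k\<close>, a set of mass \<open>1 / (N + 1)\<close>.\<close>

definition glue_weight :: "(real \<times> real) \<times> real \<Rightarrow> ennreal" where
  "glue_weight zy = (if transport (snd zy) = fst (fst zy) then ennreal (real N + 1) else 0)"

definition glued :: "(real \<times> real) measure \<Rightarrow> ((real \<times> real) \<times> real) measure" where
  "glued \<pi> = density (\<pi> \<Otimes>\<^sub>M PC N x) glue_weight"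

lemma borel_measurable_glue_weight[measurable]:
  "glue_weight \<in> borel_measurable ((borel \<Otimes>\<^sub>M borel) \<Otimes>\<^sub>M borel)"
  unfolding glue_weight_def[abs_def] by measurable

context
  fixes \<pi> \<mu>
  assumes \<pi>: "\<pi> \<in> couplings (EM N x) \<mu>"
begin

lemma sets_glue_product: "sets (\<pi> \<Otimes>\<^sub>M PC N x) = sets ((borel \<Otimes>\<^sub>M borel) \<Otimes>\<^sub>M borel)"
  by (rule sets_pair_measure_cong[OF couplingsD(1)[OF \<pi>] sets_PC])

lemma measurable_glued:
  assumes "f \<in> measurable ((borel \<Otimes>\<^sub>M borel) \<Otimes>\<^sub>M borel) M"
  shows "f \<in> measurable (\<pi> \<Otimes>\<^sub>M PC N x) M" "f \<in> measurable (glued \<pi>) M"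
  using assms measurable_cong_sets[OF sets_glue_product refl]
  by (auto simp: glued_def measurable_cong_sets[OF sets_density refl])

lemma nn_integral_glued:
  assumes "h \<in> borel_measurable ((borel \<Otimes>\<^sub>M borel) \<Otimes>\<^sub>M borel)"
  shows "(\<integral>\<^sup>+ zy. h zy \<partial>glued \<pi>) = (\<integral>\<^sup>+ z. \<integral>\<^sup>+ y. glue_weight (z, y) * h (z, y) \<partial>PC N x \<partial>\<pi>)"
proof -
  have "(\<lambda>zy. glue_weight zy * h zy) \<in> borel_measurable (\<pi> \<Otimes>\<^sub>M PC N x)"
    using assms by (intro measurable_glued) measurable
  then show ?thesis
    unfolding glued_def using assms
    by (subst nn_integral_density) (auto intro: measurable_glued simp: PC.nn_integral_fst[symmetric])
qed

lemma nn_integral_glue_weight: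
  fixes z :: "real \<times> real"
  assumes "k \<le> N" "fst z = x k" and [measurable]: "h \<in> borel_measurable borel"
  shows "(\<integral>\<^sup>+ y. glue_weight (z, y) * h y \<partial>PC N x)
    = ennreal (real N + 1) * (\<integral>\<^sup>+ y. h y * indicator (cell k) y \<partial>PC N x)"
proof -
  have "(\<integral>\<^sup>+ y. glue_weight (z, y) * h y \<partial>PC N x)
      = (\<integral>\<^sup>+ y. ennreal (real N + 1) * (h y * indicator (cell k) y) \<partial>PC N x)"
    using assms by (intro nn_integral_cong) (auto simp: glue_weight_def transport_eq_iff indicator_def)
  also have "\<dots> = ennreal (real N + 1) * (\<integral>\<^sup>+ y. h y * indicator (cell k) y \<partial>PC N x)"
    by (rule nn_integral_cmult) simp
  finally show ?thesis .
qed

lemma nn_integral_glued_fst: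
  fixes g :: "real \<times> real \<Rightarrow> ennreal"
  assumes [measurable]: "g \<in> borel_measurable (borel \<Otimes>\<^sub>M borel)"
  shows "(\<integral>\<^sup>+ zy. g (fst zy) \<partial>glued \<pi>) = (\<integral>\<^sup>+ z. g z \<partial>\<pi>)"
proof -
  have "(\<integral>\<^sup>+ zy. g (fst zy) \<partial>glued \<pi>) = (\<integral>\<^sup>+ z. \<integral>\<^sup>+ y. glue_weight (z, y) * g z \<partial>PC N x \<partial>\<pi>)"
    by (subst nn_integral_glued) simp_all
  also have "\<dots> = (\<integral>\<^sup>+ z. g z \<partial>\<pi>)"
  proof (rule nn_integral_cong_AE)
    have "AE z in \<pi>. fst z \<in> x ` {..N}"
      by (rule AE_coupling_fst[OF \<pi> AE_EM_range]) (intro borel_closed finite_imp_closed, simp)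
    then show "AE z in \<pi>. (\<integral>\<^sup>+ y. glue_weight (z, y) * g z \<partial>PC N x) = g z"
    proof (rule AE_mp, intro AE_I2 impI)
      fix z :: "real \<times> real"
      assume "fst z \<in> x ` {..N}"
      then obtain k where k: "k \<le> N" "fst z = x k"
        by auto
      have "(\<integral>\<^sup>+ y. glue_weight (z, y) * g z \<partial>PC N x)
          = ennreal (real N + 1) * (g z * emeasure (PC N x) (cell k))"
        by (simp add: nn_integral_glue_weight[OF k] nn_integral_cmult_indicator)
      also have "\<dots> = g z * (ennreal (real N + 1) * emeasure (PC N x) (cell k))"
        by (simp only: mult_ac)
      also have "\<dots> = g z"
        using k by (simp add: emeasure_cell ennreal_mult_inverse_Suc del: ennreal_plus)
      finally show "(\<integral>\<^sup>+ y. glue_weight (z, y) * g z \<partial>PC N x) = g z" .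
    qed
  qed
  finally show ?thesis .
qed

lemma nn_integral_glued_snd:
  assumes [measurable]: "h \<in> borel_measurable borel"
  shows "(\<integral>\<^sup>+ zy. h (snd zy) \<partial>glued \<pi>) = (\<integral>\<^sup>+ y. h y \<partial>PC N x)"
proof -
  define \<phi> where "\<phi> s = (\<integral>\<^sup>+ y. glue_weight ((s, 0), y) * h y \<partial>PC N x)" for s
  have [measurable]: "\<phi> \<in> borel_measurable borel"
  proof -
    have "(\<lambda>sy. glue_weight ((fst sy, 0), snd sy) * h (snd sy)) \<in> borel_measurable (borel \<Otimes>\<^sub>M PC N x)"
      using measurable_cong_sets[OF sets_pair_measure_cong[OF refl sets_PC] refl] by measurable
    from PC.borel_measurable_nn_integral_fst[OF this] show ?thesis
      unfolding \<phi>_def[abs_def] by simp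
  qed
  have "(\<integral>\<^sup>+ zy. h (snd zy) \<partial>glued \<pi>) = (\<integral>\<^sup>+ z. \<phi> (fst z) \<partial>\<pi>)"
    by (subst nn_integral_glued) (simp_all add: \<phi>_def glue_weight_def)
  also have "\<dots> = (\<integral>\<^sup>+ s. \<phi> s \<partial>EM N x)"
    by (rule nn_integral_coupling_fst[OF \<pi>]) simp
  also have "\<dots> = (\<Sum>k\<le>N. \<phi> (x k) * ennreal (1 / (real N + 1)))"
    by (simp add: nn_integral_EM sum_distrib_right)
  also have "\<dots> = (\<Sum>k\<le>N. \<integral>\<^sup>+ y. h y * indicator (cell k) y \<partial>PC N x)"
  proof (rule sum.cong[OF refl])
    fix k
    assume "k \<in> {..N}"
    then have "\<phi> (x k) = ennreal (real N + 1) * (\<integral>\<^sup>+ y. h y * indicator (cell k) y \<partial>PC N x)"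
      unfolding \<phi>_def by (intro nn_integral_glue_weight) auto
    then have "\<phi> (x k) * ennreal (1 / (real N + 1))
        = (ennreal (real N + 1) * ennreal (1 / (real N + 1)))
          * (\<integral>\<^sup>+ y. h y * indicator (cell k) y \<partial>PC N x)"
      by (simp only: mult_ac)
    then show "\<phi> (x k) * ennreal (1 / (real N + 1)) = (\<integral>\<^sup>+ y. h y * indicator (cell k) y \<partial>PC N x)"
      by (simp only: ennreal_mult_inverse_Suc mult_1)
  qed
  also have "\<dots> = (\<integral>\<^sup>+ y. h y \<partial>PC N x)"
    by (rule nn_integral_PC_cells[symmetric]) simp
  finally show ?thesis .
qed

lemma AE_glued: "AE zy in glued \<pi>. transport (snd zy) = fst (fst zy)"
  unfolding glued_def
  by (subst AE_density) (auto intro!: measurable_glued AE_I2 simp: glue_weight_def)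

lemma glued_coupling:
  "distr (glued \<pi>) (borel \<Otimes>\<^sub>M borel) (\<lambda>zy. (snd zy, snd (fst zy))) \<in> couplings (PC N x) \<mu>"
proof -
  define F where "F zy = (snd zy, snd (fst zy))" for zy :: "(real \<times> real) \<times> real"
  have [measurable]: "F \<in> measurable (glued \<pi>) (borel \<Otimes>\<^sub>M borel)"
    and snd_glued: "snd \<in> measurable (glued \<pi>) borel" "(\<lambda>zy. snd (fst zy)) \<in> measurable (glued \<pi>) borel"
    unfolding F_def by (rule measurable_glued, measurable)+
  define \<sigma> where "\<sigma> = distr (glued \<pi>) (borel \<Otimes>\<^sub>M borel) F"
  have "distr \<sigma> borel fst = PC N x"
  proof (rule measure_eqI)
    fix A
    assume "A \<in> sets (distr \<sigma> borel fst)"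
    then have [measurable]: "A \<in> sets borel"
      by simp
    have "emeasure (distr \<sigma> borel fst) A = (\<integral>\<^sup>+ zy. indicator A (snd zy) \<partial>glued \<pi>)"
      unfolding \<sigma>_def
      by (subst distr_distr) (auto simp: F_def comp_def emeasure_distr_eq_nn_integral snd_glued)
    then show "emeasure (distr \<sigma> borel fst) A = emeasure (PC N x) A"
      by (simp add: nn_integral_glued_snd)
  qed (simp add: \<sigma>_def)
  moreover have "distr \<sigma> borel snd = \<mu>"
  proof (rule measure_eqI)
    fix A
    assume "A \<in> sets (distr \<sigma> borel snd)"
    then have [measurable]: "A \<in> sets borel"
      by simp
    have "emeasure (distr \<sigma> borel snd) A = (\<integral>\<^sup>+ zy. indicator A (snd (fst zy)) \<partial>glued \<pi>)"
      unfolding \<sigma>_def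
      by (subst distr_distr) (auto simp: F_def comp_def emeasure_distr_eq_nn_integral snd_glued)
    also have "\<dots> = (\<integral>\<^sup>+ z. indicator A (snd z) \<partial>\<pi>)"
      by (subst nn_integral_glued_fst) simp_all
    also have "\<dots> = emeasure \<mu> A"
      using couplingsD(3)[OF \<pi>] by (subst nn_integral_coupling_snd[OF \<pi>]) auto
    finally show "emeasure (distr \<sigma> borel snd) A = emeasure \<mu> A" .
  qed (use couplingsD(3)[OF \<pi>] in \<open>auto simp: \<sigma>_def\<close>)
  ultimately show ?thesis
    unfolding \<sigma>_def F_def[abs_def] by (simp add: couplings_def)
qed

lemma nn_integral_glued_dist_le:
  assumes p: "p \<ge> 0"
  shows "(\<integral>\<^sup>+ zy. ennreal (\<bar>snd zy - snd (fst zy)\<bar> powr p) \<partial>glued \<pi>)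
    \<le> ennreal (2 powr p) * (transport_cost p + coupling_cost p \<pi>)"
proof -
  have "(\<integral>\<^sup>+ zy. ennreal (\<bar>snd zy - snd (fst zy)\<bar> powr p) \<partial>glued \<pi>)
      \<le> (\<integral>\<^sup>+ zy. ennreal (2 powr p) * (ennreal (\<bar>snd zy - transport (snd zy)\<bar> powr p)
        + ennreal (\<bar>fst (fst zy) - snd (fst zy)\<bar> powr p)) \<partial>glued \<pi>)"
    using AE_glued
  proof (intro nn_integral_mono_AE, elim AE_mp, intro AE_I2 impI)
    fix zy :: "(real \<times> real) \<times> real"
    assume "transport (snd zy) = fst (fst zy)"
    then show "ennreal (\<bar>snd zy - snd (fst zy)\<bar> powr p)
      \<le> ennreal (2 powr p) * (ennreal (\<bar>snd zy - transport (snd zy)\<bar> powr p)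
        + ennreal (\<bar>fst (fst zy) - snd (fst zy)\<bar> powr p))"
      using ennreal_abs_diff_powr_le[OF p, of "snd zy" "snd (fst zy)" "transport (snd zy)"] by simp
  qed
  also have "\<dots> = ennreal (2 powr p)
      * ((\<integral>\<^sup>+ zy. ennreal (\<bar>snd zy - transport (snd zy)\<bar> powr p) \<partial>glued \<pi>)
        + (\<integral>\<^sup>+ zy. ennreal (\<bar>fst (fst zy) - snd (fst zy)\<bar> powr p) \<partial>glued \<pi>))"
    by (rule nn_integral_cmult_add) (rule measurable_glued, measurable)+
  also have "(\<integral>\<^sup>+ zy. ennreal (\<bar>snd zy - transport (snd zy)\<bar> powr p) \<partial>glued \<pi>) = transport_cost p"
    unfolding transport_cost_def
    by (subst nn_integral_glued_snd[where h = "\<lambda>y. ennreal (\<bar>y - transport y\<bar> powr p)"])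
      (simp_all add: abs_minus_commute)
  also have "(\<integral>\<^sup>+ zy. ennreal (\<bar>fst (fst zy) - snd (fst zy)\<bar> powr p) \<partial>glued \<pi>) = coupling_cost p \<pi>"
    unfolding coupling_cost_def by (rule nn_integral_glued_fst) simp
  finally show ?thesis .
qed

lemma wass_cost_PC_le:
  assumes "p \<ge> 0"
  shows "wass_cost p (PC N x) \<mu> \<le> ennreal (2 powr p) * (transport_cost p + coupling_cost p \<pi>)"
proof -
  have "wass_cost p (PC N x) \<mu>
      \<le> coupling_cost p (distr (glued \<pi>) (borel \<Otimes>\<^sub>M borel) (\<lambda>zy. (snd zy, snd (fst zy))))"
    by (rule wass_cost_le_coupling_cost[OF glued_coupling])
  also have "\<dots> = (\<integral>\<^sup>+ zy. ennreal (\<bar>snd zy - snd (fst zy)\<bar> powr p) \<partial>glued \<pi>)"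
    unfolding coupling_cost_def by (subst nn_integral_distr) (auto intro: measurable_glued)
  also have "\<dots> \<le> ennreal (2 powr p) * (transport_cost p + coupling_cost p \<pi>)"
    by (rule nn_integral_glued_dist_le[OF assms])
  finally show ?thesis .
qed

end

end

lemma KN_imp_config:
  assumes "KN N M x" "M > 0" "N \<ge> 1"
  shows "config N x"
proof
  fix i
  assume "i < N"
  then have "x (Suc i) - x i \<ge> 1 / (real N * M)"
    using assms(1) by (simp add: KN_def)
  moreover have "1 / (real N * M) > 0"
    using assms(2,3) by simp
  ultimately show "x i < x (Suc i)"
    by linarith
qed (rule assms(3))

locale config_sequence =
  fixes x :: "nat \<Rightarrow> nat \<Rightarrow> real"
  assumes config: "\<And>N. N \<ge> 1 \<Longrightarrow> config N (x N)"
begin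

lemma integral_PC_EM_diff_tendsto_0:
  fixes f :: "real \<Rightarrow> real"
  assumes cont: "continuous_on UNIV f" and supp: "compact (closure {t. f t \<noteq> 0})"
  shows "(\<lambda>N. (\<integral>y. f y \<partial>PC N (x N)) - (\<integral>y. f y \<partial>EM N (x N))) \<longlonglongrightarrow> 0"
proof (rule tendstoI)
  fix r :: real
  assume "r > 0"
  have [measurable]: "f \<in> borel_measurable borel"
    by (rule borel_measurable_continuous_onI[OF cont])
  obtain B where B: "\<And>y. \<bar>f y\<bar> \<le> B"
    using continuous_compact_support_bounded[OF cont supp] by blast
  obtain L K where L: "L > 0" and K: "K \<ge> 0"
    and modulus: "\<And>s t. \<bar>f s - f t\<bar> \<le> r / 2 + K * \<bar>clip L s - clip L t\<bar>"
    using compact_support_modulus[OF cont supp, of "r / 2"] \<open>r > 0\<close> by auto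
  have "eventually (\<lambda>N. K * (2 * L) / real N < r / 2) sequentially"
    using order_tendstoD(2)[OF lim_const_over_n[of "K * (2 * L)"], of "r / 2"] \<open>r > 0\<close> by simp
  with eventually_ge_at_top[of 1]
  show "eventually (\<lambda>N. dist ((\<integral>y. f y \<partial>PC N (x N)) - (\<integral>y. f y \<partial>EM N (x N))) 0 < r) sequentially"
  proof eventually_elim
    case (elim N)
    have "\<bar>(\<integral>y. f y \<partial>PC N (x N)) - (\<integral>y. f y \<partial>EM N (x N))\<bar> \<le> r / 2 + K * (2 * L / N)"
      using config.integral_PC_EM_diff_le[OF config[OF elim(1)] _ B _ K modulus] L by simp
    then show ?case
      using elim(2) by (simp add: dist_real_def)
  qed
qed

lemma vague_conv_EM_iff_PC: "vague_conv (\<lambda>N. EM N (x N)) \<mu> \<longleftrightarrow> vague_conv (\<lambda>N. PC N (x N)) \<mu>"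
  unfolding vague_conv_def
proof (intro iff_allI imp_cong refl iffI)
  fix f :: "real \<Rightarrow> real"
  assume f: "continuous_on UNIV f \<and> compact (closure {t. f t \<noteq> 0})"
  then have diff: "(\<lambda>N. (\<integral>y. f y \<partial>PC N (x N)) - (\<integral>y. f y \<partial>EM N (x N))) \<longlonglongrightarrow> 0"
    by (intro integral_PC_EM_diff_tendsto_0) auto
  show "(\<lambda>N. \<integral>y. f y \<partial>PC N (x N)) \<longlonglongrightarrow> integral\<^sup>L \<mu> f"
    if "(\<lambda>N. \<integral>y. f y \<partial>EM N (x N)) \<longlonglongrightarrow> integral\<^sup>L \<mu> f"
    using that diff by (rule Lim_transform)
  show "(\<lambda>N. \<integral>y. f y \<partial>EM N (x N)) \<longlonglongrightarrow> integral\<^sup>L \<mu> f"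
    if "(\<lambda>N. \<integral>y. f y \<partial>PC N (x N)) \<longlonglongrightarrow> integral\<^sup>L \<mu> f"
  proof (rule Lim_transform[OF that])
    show "(\<lambda>N. (\<integral>y. f y \<partial>EM N (x N)) - (\<integral>y. f y \<partial>PC N (x N))) \<longlonglongrightarrow> 0"
      using tendsto_minus[OF diff] by simp
  qed
qed

lemma equi_int_moments_PC_of_EM:
  assumes p: "p \<ge> 0" and EM: "equi_int_moments p (\<lambda>N. EM N (x N))"
  shows "equi_int_moments p (\<lambda>N. PC N (x N))"
  unfolding equi_int_moments_iff
proof (intro allI impI)
  fix \<epsilon> :: real
  assume "\<epsilon> > 0"
  then have "\<epsilon> / 4 > 0"
    by simp
  then obtain L where L: "L > 0"
    "eventually (\<lambda>N. moment_tail p (EM N (x N)) L < ennreal (\<epsilon> / 4)) sequentially"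
    using EM unfolding equi_int_moments_iff by blast
  from L(2) eventually_ge_at_top[of 1]
  have "eventually (\<lambda>N. moment_tail p (PC N (x N)) L < ennreal \<epsilon>) sequentially"
  proof eventually_elim
    case (elim N)
    have "moment_tail p (PC N (x N)) L \<le> ennreal 4 * moment_tail p (EM N (x N)) L"
      using config.moment_tail_PC_le[OF config[OF elim(2)] p] by simp
    also have "\<dots> < ennreal \<epsilon>"
      using ennreal_mult_less_mult[OF _ elim(1), of 4] by simp
    finally show ?case .
  qed
  with L(1) show "\<exists>L>0. eventually (\<lambda>N. moment_tail p (PC N (x N)) L < ennreal \<epsilon>) sequentially"
    by blast
qed

lemma equi_int_moments_EM_of_PC:
  assumes p: "p \<ge> 0" and PC: "equi_int_moments p (\<lambda>N. PC N (x N))"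
  shows "equi_int_moments p (\<lambda>N. EM N (x N))"
  unfolding equi_int_moments_iff
proof (intro allI impI)
  fix \<epsilon> :: real
  assume "\<epsilon> > 0"
  then have "\<epsilon> / 2 powr (p + 3) > 0"
    by simp
  then obtain L where L: "L > 0"
    "eventually (\<lambda>N. moment_tail p (PC N (x N)) L < ennreal (\<epsilon> / 2 powr (p + 3))) sequentially"
    using PC unfolding equi_int_moments_iff by blast
  from L(2) eventually_ge_at_top[of 1]
  have "eventually (\<lambda>N. moment_tail p (EM N (x N)) (2 * L) < ennreal \<epsilon>) sequentially"
  proof eventually_elim
    case (elim N)
    have "moment_tail p (EM N (x N)) (2 * L) \<le> ennreal (2 powr (p + 3)) * moment_tail p (PC N (x N)) L"
      using config.moment_tail_EM_le[OF config[OF elim(2)]] L(1) p by simp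
    also have "\<dots> < ennreal \<epsilon>"
      using ennreal_mult_less_mult[OF _ elim(1), of "2 powr (p + 3)"] by simp
    finally show ?case .
  qed
  with L(1) show "\<exists>L>0. eventually (\<lambda>N. moment_tail p (EM N (x N)) L < ennreal \<epsilon>) sequentially"
    by (intro exI[of _ "2 * L"]) auto
qed

lemma equi_int_moments_EM_iff_PC:
  "p \<ge> 0 \<Longrightarrow> equi_int_moments p (\<lambda>N. EM N (x N)) \<longleftrightarrow> equi_int_moments p (\<lambda>N. PC N (x N))"
  using equi_int_moments_PC_of_EM equi_int_moments_EM_of_PC by blast

lemma transport_cost_tendsto_0:
  assumes p: "p \<ge> 1" and equi: "equi_int_moments p (\<lambda>N. EM N (x N))"
  shows "(\<lambda>N. config.transport_cost N (x N) p) \<longlonglongrightarrow> 0"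
  unfolding tendsto_zero_ennreal_iff
proof (intro allI impI)
  fix \<epsilon> :: real
  assume "\<epsilon> > 0"
  define C where "C = 4 * 2 powr p"
  have C: "C > 0"
    by (simp add: C_def)
  have "\<epsilon> / 2 / C > 0"
    using \<open>\<epsilon> > 0\<close> C by simp
  then obtain L where L: "L > 0"
    "eventually (\<lambda>N. moment_tail p (EM N (x N)) L < ennreal (\<epsilon> / 2 / C)) sequentially"
    using equi unfolding equi_int_moments_iff by blast
  have "eventually (\<lambda>N. (2 * L) powr p / real N < \<epsilon> / 2) sequentially"
    using order_tendstoD(2)[OF lim_const_over_n[of "(2 * L) powr p"], of "\<epsilon> / 2"] \<open>\<epsilon> > 0\<close> by simp
  with L(2) eventually_ge_at_top[of 1]
  show "eventually (\<lambda>N. config.transport_cost N (x N) p < ennreal \<epsilon>) sequentially"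
  proof eventually_elim
    case (elim N)
    have "config.transport_cost N (x N) p
        \<le> ennreal ((2 * L) powr p / N) + ennreal C * moment_tail p (EM N (x N)) L"
      unfolding C_def using config.transport_cost_le[OF config[OF elim(2)] L(1) p] .
    also have "\<dots> < ennreal (\<epsilon> / 2 + C * (\<epsilon> / 2 / C))"
    proof (rule add_mono_ennreal)
      show "ennreal ((2 * L) powr p / N) < ennreal (\<epsilon> / 2)"
        using elim(3) \<open>\<epsilon> > 0\<close> by (intro ennreal_lessI) auto
    qed (rule ennreal_mult_less_mult[OF C elim(1)])
    also have "\<epsilon> / 2 + C * (\<epsilon> / 2 / C) = \<epsilon>"
      using C by simp
    finally show ?case .
  qed
qed

lemma eventually_moment_EM_finite: "eventually (\<lambda>N. moment_tail p (EM N (x N)) 0 < \<infinity>) sequentially"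
  using eventually_ge_at_top[of 1] by eventually_elim (rule config.moment_tail_EM_finite[OF config])

lemma eventually_moment_PC_finite:
  "p \<ge> 0 \<Longrightarrow> eventually (\<lambda>N. moment_tail p (PC N (x N)) 0 < \<infinity>) sequentially"
  using eventually_ge_at_top[of 1] by eventually_elim (rule config.moment_tail_PC_finite[OF config])

lemma wass_cost_PC_tendsto_0_of_EM:
  assumes p: "p \<ge> 1" and sets: "sets \<mu> = sets borel"
    and W: "(\<lambda>N. wass_cost p (EM N (x N)) \<mu>) \<longlonglongrightarrow> 0"
  shows "(\<lambda>N. wass_cost p (PC N (x N)) \<mu>) \<longlonglongrightarrow> 0"
proof (rule wass_cost_tendsto_0_transfer[OF _ W])
  have "equi_int_moments p (\<lambda>N. EM N (x N))"
    using p by (intro equi_int_moments_of_wass_cost[OF W _ sets eventually_moment_EM_finite]) auto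
  then show "(\<lambda>N. config.transport_cost N (x N) p) \<longlonglongrightarrow> 0"
    by (rule transport_cost_tendsto_0[OF p])
  show "eventually (\<lambda>N. \<forall>\<pi>\<in>couplings (EM N (x N)) \<mu>. wass_cost p (PC N (x N)) \<mu>
      \<le> ennreal (2 powr p) * (config.transport_cost N (x N) p + coupling_cost p \<pi>)) sequentially"
    using eventually_ge_at_top[of 1]
    by eventually_elim (use p in \<open>auto intro: config.wass_cost_PC_le[OF config]\<close>)
qed

lemma wass_cost_EM_tendsto_0_of_PC:
  assumes p: "p \<ge> 1" and sets: "sets \<mu> = sets borel"
    and W: "(\<lambda>N. wass_cost p (PC N (x N)) \<mu>) \<longlonglongrightarrow> 0"
  shows "(\<lambda>N. wass_cost p (EM N (x N)) \<mu>) \<longlonglongrightarrow> 0"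
proof (rule wass_cost_tendsto_0_transfer[OF _ W])
  have "equi_int_moments p (\<lambda>N. PC N (x N))"
    using p by (intro equi_int_moments_of_wass_cost[OF W _ sets eventually_moment_PC_finite]) auto
  then have "equi_int_moments p (\<lambda>N. EM N (x N))"
    using p by (intro equi_int_moments_EM_of_PC) auto
  then show "(\<lambda>N. config.transport_cost N (x N) p) \<longlonglongrightarrow> 0"
    by (rule transport_cost_tendsto_0[OF p])
  show "eventually (\<lambda>N. \<forall>\<pi>\<in>couplings (PC N (x N)) \<mu>. wass_cost p (EM N (x N)) \<mu>
      \<le> ennreal (2 powr p) * (config.transport_cost N (x N) p + coupling_cost p \<pi>)) sequentially"
    using eventually_ge_at_top[of 1]
    by eventually_elim (use p in \<open>auto intro: config.wass_cost_EM_le[OF config]\<close>)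
qed

lemma Wp_EM_tendsto_0_iff_PC:
  assumes p: "p \<ge> 1" and "prob_real \<mu>"
  shows "((\<lambda>N. Wp p (EM N (x N)) \<mu>) \<longlonglongrightarrow> 0) \<longleftrightarrow> ((\<lambda>N. Wp p (PC N (x N)) \<mu>) \<longlonglongrightarrow> 0)"
proof -
  have "sets \<mu> = sets borel"
    using \<open>prob_real \<mu>\<close> by (simp add: prob_real_def)
  then have "((\<lambda>N. wass_cost p (EM N (x N)) \<mu>) \<longlonglongrightarrow> 0) \<longleftrightarrow> ((\<lambda>N. wass_cost p (PC N (x N)) \<mu>) \<longlonglongrightarrow> 0)"
    using wass_cost_PC_tendsto_0_of_EM[OF p] wass_cost_EM_tendsto_0_of_PC[OF p] by blast
  then show ?thesis
    using Wp_tendsto_0_iff p by simp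
qed

end

theorem lemma5p1:
  fixes p M :: real and x :: "nat \<Rightarrow> nat \<Rightarrow> real" and \<mu> :: "real measure"
  assumes "p \<ge> 1" and "M > 0"
    and "\<And>N. N \<ge> 1 \<Longrightarrow> KN N M (x N)"
    and "prob_real \<mu>"
  shows "(vague_conv (\<lambda>N. EM N (x N)) \<mu> \<longleftrightarrow> vague_conv (\<lambda>N. PC N (x N)) \<mu>)
       \<and> (equi_int_moments p (\<lambda>N. EM N (x N)) \<longleftrightarrow> equi_int_moments p (\<lambda>N. PC N (x N)))
       \<and> ((\<lambda>N. Wp p (EM N (x N)) \<mu>) \<longlonglongrightarrow> 0 \<longleftrightarrow> (\<lambda>N. Wp p (PC N (x N)) \<mu>) \<longlonglongrightarrow> 0)"
proof -
  interpret config_sequence x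
    by (rule config_sequence.intro) (use KN_imp_config assms(2,3) in blast)
  show ?thesis
    using vague_conv_EM_iff_PC equi_int_moments_EM_iff_PC Wp_EM_tendsto_0_iff_PC assms(1,4) by simp
qed

end
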